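(* Let $(X,d)$ be a metric space and $x\in X$ such that $\limsup_{r\to0}n_{\lambda r}(\overline{B}_X(x,r))<\infty$ for all $\lambda>0$. Then $$\overline{\delta}_X(x)=\limsup_{r\to0}\sup_{T\in\mathcal{T}_xX}\frac{\log n_r(\overline{B}_T(x,1))}{\log 1/r},\qquad \underline{\delta}_X(x)=\liminf_{r\to0}\inf_{T\in\mathcal{T}_xX}\frac{\log n_r(\overline{B}_T(x,1))}{\log 1/r}.$$
   Context: $\overline{B}_X(x,r)=\{y:d(x,y)\le r\}$; $n_r(A)$ is the minimum number of open balls of radius $r$ needed to cover $A$. The lower and upper tangential dimensions of $X$ at $x$ are $\underline{\delta}_X(x)=\liminf_{\lambda\to0}\liminf_{r\to0}\frac{\log n(\lambda r,\overline{B}_X(x,r))}{\log1/\lambda}$ and $\overline{\delta}_X(x)=\limsup_{\lambda\to0}\limsup_{r\to0}\frac{\log n(\lambda r,\overline{B}_X(x,r))}{\log1/\lambda}$. A tangent set of $X$ at $x$ is any limit point as $t\to\infty$ of $(X,x,td)$ (metric rescaled by $t$, base point $x$) in the pointed Gromov–Hausdorff topology; $\mathcal{T}_xX$ is the set of tangent sets, and for $T\in\mathcal{T}_xX$, $\overline{B}_T(x,1)$ is the closed ball of radius 1 about the base point of $T$ (still denoted $x$). *)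

theory Defs
  imports "HOL-Analysis.Analysis" "HOL-Library.Extended_Nat" "HOL-Library.Extended_Real"
begin

definition covnum :: "'b set \<Rightarrow> ('b \<Rightarrow> 'b \<Rightarrow> real) \<Rightarrow> real \<Rightarrow> 'b set \<Rightarrow> enat" where
  "covnum S d r A = Inf {enat (card C) | C. finite C \<and> C \<subseteq> S \<and>
       A \<subseteq> (\<Union>c\<in>C. {y\<in>S. d c y < r})}"

text \<open>Logarithm of an extended natural number (covering numbers are \<ge> 1 here).\<close>
definition elog :: "enat \<Rightarrow> ereal" where
  "elog n = (case n of enat k \<Rightarrow> ereal (ln (real k)) | \<infinity> \<Rightarrow> \<infinity>)"

definition lower_tdim :: "'a::metric_space \<Rightarrow> ereal" where
  "lower_tdim x = Liminf (at_right 0) (\<lambda>lam. Liminf (at_right 0)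
      (\<lambda>r. elog (covnum UNIV dist (lam * r) (cball x r)) / ereal (ln (1 / lam))))"

definition upper_tdim :: "'a::metric_space \<Rightarrow> ereal" where
  "upper_tdim x = Limsup (at_right 0) (\<lambda>lam. Limsup (at_right 0)
      (\<lambda>r. elog (covnum UNIV dist (lam * r) (cball x r)) / ereal (ln (1 / lam))))"

text \<open>Pointed Gromov--Hausdorff convergence (Burago--Burago--Ivanov, Def. 8.1.1) of a
  sequence of pointed metric spaces (Xs n, ds n, ps n) to (Y, dY, q).\<close>
definition pGH_conv ::
  "(nat \<Rightarrow> 'a set) \<Rightarrow> (nat \<Rightarrow> 'a \<Rightarrow> 'a \<Rightarrow> real) \<Rightarrow> (nat \<Rightarrow> 'a)
   \<Rightarrow> 'b set \<Rightarrow> ('b \<Rightarrow> 'b \<Rightarrow> real) \<Rightarrow> 'b \<Rightarrow> bool" where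
  "pGH_conv Xs ds ps Y dY q \<longleftrightarrow>
     (\<forall>R>0. \<forall>\<epsilon>>0. \<forall>\<^sub>F n in sequentially.
        (\<exists>f. (\<forall>a\<in>{a\<in>Xs n. ds n (ps n) a < R}. f a \<in> Y) \<and>
             f (ps n) = q \<and>
             (\<forall>a\<in>{a\<in>Xs n. ds n (ps n) a < R}. \<forall>b\<in>{b\<in>Xs n. ds n (ps n) b < R}.
                 \<bar>dY (f a) (f b) - ds n a b\<bar> < \<epsilon>) \<and>
             (\<forall>y\<in>{y\<in>Y. dY q y < R - \<epsilon>}. \<exists>a\<in>{a\<in>Xs n. ds n (ps n) a < R}.
                 dY (f a) y < \<epsilon>)))"

text \<open>Tangent sets of X at x, represented as complete pointed metric spaces (S, dT, p)
  carried by a subset of the reals (every tangent is separable here, hence of cardinality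
  at most the continuum, so every isometry class has such a representative).\<close>
definition tangents :: "'a::metric_space \<Rightarrow> (real set \<times> (real \<Rightarrow> real \<Rightarrow> real) \<times> real) set" where
  "tangents x = {(S, dT, p). Metric_space S dT \<and> Metric_space.mcomplete S dT \<and> p \<in> S \<and>
      (\<exists>t :: nat \<Rightarrow> real. (\<forall>n. t n > 0) \<and> filterlim t at_top sequentially \<and>
         pGH_conv (\<lambda>n. UNIV) (\<lambda>n a b. t n * dist a b) (\<lambda>n. x) S dT p)}"

definition unit_cball :: "'b set \<times> ('b \<Rightarrow> 'b \<Rightarrow> real) \<times> 'b \<Rightarrow> 'b set" where
  "unit_cball T = (case T of (S, dT, p) \<Rightarrow> {y\<in>S. dT p y \<le> 1})"

definition covnum_T :: "'b set \<times> ('b \<Rightarrow> 'b \<Rightarrow> real) \<times> 'b \<Rightarrow> real \<Rightarrow> 'b set \<Rightarrow> enat" where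
  "covnum_T T r A = (case T of (S, dT, p) \<Rightarrow> covnum S dT r A)"

end

theory Submission
  imports Defs "HOL-Library.Equipollence" "HOL-Library.Diagonal_Subsequence" "HOL-Real_Asymp.Real_Asymp"
begin

text \<open>
  A pointed Gromov--Hausdorff approximation of (X, x, t d) by a tangent T changes covering
  numbers of unit balls only by a slight change of the radii. Hence every covering number
  n_r(B_T(x,1)) of a tangent is squeezed between covering numbers n_r'(B_X(x,s)) with r'/r
  close to 1, at arbitrarily small scales s. Conversely, the hypothesis makes the rescaled
  balls (X, x, d/s) uniformly totally bounded as s tends to 0, so Gromov's compactness argument
  (finite nets, a diagonal subsequence of their rescaled distances, completion of the limit
  pseudometric) yields a tangent along a subsequence of any sequence of scales. Choosing the
  scales where n_(lambda s)(B(x,s)) attains its limsup (resp. liminf) gives a tangent that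
  realises it. Finally, replacing lambda by lambda/2 changes log(1/lambda) by a factor
  tending to 1.
\<close>

section \<open>Covering numbers\<close>

lemma covnum_le_card:
  assumes "finite C" "C \<subseteq> S" "A \<subseteq> (\<Union>c\<in>C. {y\<in>S. d c y < r})"
  shows "covnum S d r A \<le> enat (card C)"
  unfolding covnum_def using assms by (auto intro!: Inf_lower)

lemma covnum_obtain_cover:
  assumes "covnum S d r A \<noteq> \<infinity>"
  obtains C where "finite C" "C \<subseteq> S" "A \<subseteq> (\<Union>c\<in>C. {y\<in>S. d c y < r})"
    "covnum S d r A = enat (card C)"
proof -
  let ?N = "{enat (card C) | C. finite C \<and> C \<subseteq> S \<and> A \<subseteq> (\<Union>c\<in>C. {y\<in>S. d c y < r})}"
  have "?N \<noteq> {}"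
    using assms unfolding covnum_def by (auto simp: top_enat_def[symmetric])
  then have "Inf ?N \<in> ?N"
    unfolding Inf_enat_def by (auto intro: LeastI)
  then show ?thesis
    using that unfolding covnum_def by auto
qed

lemma covnum_mono:
  assumes "A \<subseteq> B" "r \<le> r'"
  shows "covnum S d r' A \<le> covnum S d r B"
  unfolding covnum_def
proof (rule Inf_superset_mono, rule subsetI)
  fix m assume "m \<in> {enat (card C) | C. finite C \<and> C \<subseteq> S \<and> B \<subseteq> (\<Union>c\<in>C. {y\<in>S. d c y < r})}"
  then obtain C where C: "m = enat (card C)" "finite C" "C \<subseteq> S" "B \<subseteq> (\<Union>c\<in>C. {y\<in>S. d c y < r})"
    by blast
  have "A \<subseteq> (\<Union>c\<in>C. {y\<in>S. d c y < r'})"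
    using assms C(4) by force
  then show "m \<in> {enat (card C) | C. finite C \<and> C \<subseteq> S \<and> A \<subseteq> (\<Union>c\<in>C. {y\<in>S. d c y < r'})}"
    using C by blast
qed

lemma covnum_le_covnum:
  assumes "\<And>C. finite C \<Longrightarrow> C \<subseteq> X \<Longrightarrow> A \<subseteq> (\<Union>c\<in>C. {a\<in>X. dX c a < \<rho>}) \<Longrightarrow>
             \<exists>C'. finite C' \<and> C' \<subseteq> Y \<and> card C' \<le> card C \<and> B \<subseteq> (\<Union>c\<in>C'. {y\<in>Y. dY c y < r})"
  shows "covnum Y dY r B \<le> covnum X dX \<rho> A"
proof (cases "covnum X dX \<rho> A = \<infinity>")
  case False
  then obtain C where C: "finite C" "C \<subseteq> X" "A \<subseteq> (\<Union>c\<in>C. {a\<in>X. dX c a < \<rho>})"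
    and card: "covnum X dX \<rho> A = enat (card C)"
    by (rule covnum_obtain_cover)
  obtain C' where "finite C'" "C' \<subseteq> Y" "card C' \<le> card C" "B \<subseteq> (\<Union>c\<in>C'. {y\<in>Y. dY c y < r})"
    using assms[OF C] by blast
  then have "covnum Y dY r B \<le> enat (card C')"
    by (intro covnum_le_card)
  also have "\<dots> \<le> covnum X dX \<rho> A"
    using card \<open>card C' \<le> card C\<close> by simp
  finally show ?thesis .
qed simp

lemma covnum_rescale:
  assumes "c > 0"
  shows "covnum S (\<lambda>a b. c * d a b) r A = covnum S d (r / c) A"
proof -
  have "c * d a y < r \<longleftrightarrow> d a y < r / c" for a y
    using assms by (simp add: pos_less_divide_eq mult.commute)
  then show ?thesis
    unfolding covnum_def by presburger
qed

lemma covering_centres: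
  fixes x :: "'a::metric_space"
  assumes "covnum UNIV dist r (cball x R) \<le> enat N" "0 \<le> r" "0 \<le> R"
  obtains P :: "nat \<Rightarrow> 'a" where "\<And>i. dist x (P i) \<le> R + r" "cball x R \<subseteq> (\<Union>i<N. ball (P i) r)"
proof -
  obtain C where C: "finite C" "cball x R \<subseteq> (\<Union>c\<in>C. ball c r)"
    and card: "covnum UNIV dist r (cball x R) = enat (card C)"
  proof -
    have "covnum UNIV dist r (cball x R) \<noteq> \<infinity>"
      using enat_ile[OF assms(1)] by auto
    then show ?thesis
      by (rule covnum_obtain_cover) (use that in \<open>auto simp: ball_def\<close>)
  qed
  obtain h where h: "bij_betw h {..<card C} C"
    using bij_betw_from_nat_into_finite[OF C(1)] by blast
  \<comment> \<open>Centres of balls missing \<open>cball x R\<close> are moved to \<open>x\<close>, keeping all centres near \<open>x\<close>.\<close>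
  define P where "P i = (if i < card C \<and> ball (h i) r \<inter> cball x R \<noteq> {} then h i else x)" for i
  show ?thesis
  proof
    show "dist x (P i) \<le> R + r" for i
    proof (cases "i < card C \<and> ball (h i) r \<inter> cball x R \<noteq> {}")
      case True
      then obtain a where "dist (h i) a < r" "dist x a \<le> R"
        by auto
      then show ?thesis
        using True dist_triangle[of x "h i" a] by (simp add: P_def dist_commute)
    qed (use assms in \<open>auto simp: P_def\<close>)
    show "cball x R \<subseteq> (\<Union>i<N. ball (P i) r)"
    proof
      fix a assume a: "a \<in> cball x R"
      then obtain c where "c \<in> C" "a \<in> ball c r"
        using C(2) by blast
      then obtain i where "i < card C" "a \<in> ball (h i) r"
        using h by (metis bij_betw_iff_bijections lessThan_iff)
      moreover have "card C \<le> N"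
        using assms(1) card by simp
      ultimately show "a \<in> (\<Union>i<N. ball (P i) r)"
        using a by (auto simp: P_def intro!: bexI[of _ i])
    qed
  qed
qed

lemma elog_nonneg: "0 \<le> elog n"
proof (cases n)
  case (enat k)
  then show ?thesis
    by (cases "k = 0") (auto simp: elog_def)
qed (simp add: elog_def)

lemma elog_mono:
  assumes "m \<le> n"
  shows "elog m \<le> elog n"
proof (cases m)
  case (enat a)
  show ?thesis
  proof (cases "a = 0")
    case True
    then show ?thesis using enat elog_nonneg[of n] by (simp add: elog_def zero_ereal_def)
  next
    case False
    then show ?thesis using enat assms by (cases n) (auto simp: elog_def)
  qed
qed (use assms in \<open>auto simp: elog_def\<close>)

lemma elog_divide_mono: "m \<le> n \<Longrightarrow> 0 < c \<Longrightarrow> elog m / ereal c \<le> elog n / ereal c"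
  by (intro ereal_divide_right_mono elog_mono) simp_all

lemma elog_div_ln_nonneg:
  assumes "0 < r" "r < 1"
  shows "0 \<le> elog n / ereal (ln (1 / r))"
proof -
  have "0 / ereal (ln (1 / r)) \<le> elog n / ereal (ln (1 / r))"
    using assms by (intro ereal_divide_right_mono elog_nonneg) simp
  then show ?thesis
    by simp
qed

lemma enat_Limsup_attained:
  fixes f :: "'b \<Rightarrow> enat"
  assumes "Limsup F f \<noteq> \<infinity>"
  shows "\<forall>\<^sub>F x in F. f x \<le> Limsup F f"
    and "F \<noteq> bot \<Longrightarrow> \<exists>\<^sub>F x in F. Limsup F f \<le> f x"
proof -
  obtain N where N: "Limsup F f = enat N"
    using assms by auto
  have "\<forall>\<^sub>F x in F. f x < enat (Suc N)"
    by (rule Limsup_lessD) (simp add: N)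
  then show "\<forall>\<^sub>F x in F. f x \<le> Limsup F f"
    by (rule eventually_mono) (metis N Suc_ile_eq linorder_not_le)
  assume F: "F \<noteq> bot"
  show "\<exists>\<^sub>F x in F. Limsup F f \<le> f x"
  proof (rule ccontr)
    assume "\<not> (\<exists>\<^sub>F x in F. Limsup F f \<le> f x)"
    then have less: "\<forall>\<^sub>F x in F. f x < enat N"
      by (simp add: not_frequently not_le N)
    show False
    proof (cases N)
      case 0
      with less F show False
        by (simp add: eventually_False[symmetric] zero_enat_def[symmetric])
    next
      case (Suc M)
      from less have "\<forall>\<^sub>F x in F. f x \<le> enat M"
        by (rule eventually_mono) (metis Suc Suc_ile_eq linorder_not_le)
      then have "Limsup F f \<le> enat M"
        by (rule Limsup_bounded)
      with N Suc show False by simp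
    qed
  qed
qed

lemma enat_Liminf_attained:
  fixes f :: "'b \<Rightarrow> enat"
  assumes "Liminf F f \<noteq> \<infinity>"
  shows "\<forall>\<^sub>F x in F. Liminf F f \<le> f x"
    and "\<exists>\<^sub>F x in F. f x \<le> Liminf F f"
proof -
  obtain N where N: "Liminf F f = enat N"
    using assms by auto
  show "\<forall>\<^sub>F x in F. Liminf F f \<le> f x"
  proof (cases N)
    case (Suc M)
    have "\<forall>\<^sub>F x in F. enat M < f x"
      by (rule less_LiminfD) (simp add: N Suc)
    then show ?thesis
      by (rule eventually_mono) (simp add: N Suc Suc_ile_eq)
  qed (simp add: N zero_enat_def[symmetric])
  show "\<exists>\<^sub>F x in F. f x \<le> Liminf F f"
  proof (rule ccontr)
    assume "\<not> (\<exists>\<^sub>F x in F. f x \<le> Liminf F f)"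
    then have "\<forall>\<^sub>F x in F. enat (Suc N) \<le> f x"
      by (simp add: not_frequently not_le N Suc_ile_eq)
    then have "enat (Suc N) \<le> Liminf F f"
      by (rule Liminf_bounded)
    with N show False by simp
  qed
qed

lemma le_Limsup_of_frequently:
  fixes f :: "_ \<Rightarrow> 'b::complete_linorder"
  assumes "\<exists>\<^sub>F x in F. c \<le> f x"
  shows "c \<le> Limsup F f"
proof (rule ccontr)
  assume "\<not> c \<le> Limsup F f"
  then have "\<forall>\<^sub>F x in F. \<not> c \<le> f x"
    by (auto simp: not_le dest: Limsup_lessD elim: eventually_mono)
  with assms show False
    by (simp add: not_frequently[symmetric])
qed

lemma Liminf_le_of_frequently:
  fixes f :: "_ \<Rightarrow> 'b::complete_linorder"
  assumes "\<exists>\<^sub>F x in F. f x \<le> c"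
  shows "Liminf F f \<le> c"
proof (rule ccontr)
  assume "\<not> Liminf F f \<le> c"
  then have "\<forall>\<^sub>F x in F. \<not> f x \<le> c"
    by (auto simp: not_le dest: less_LiminfD elim: eventually_mono)
  with assms show False
    by (simp add: not_frequently[symmetric])
qed

lemma frequently_of_filterlim:
  assumes "filterlim u F sequentially" "\<forall>\<^sub>F n in sequentially. P (u n)"
  shows "\<exists>\<^sub>F s in F. P s"
proof (rule ccontr)
  assume "\<not> (\<exists>\<^sub>F s in F. P s)"
  then have "\<forall>\<^sub>F s in F. \<not> P s"
    by (simp add: not_frequently)
  then have "\<forall>\<^sub>F n in sequentially. \<not> P (u n)"
    using assms(1) by (rule eventually_compose_filterlim)
  with assms(2) show False
    by (auto dest: eventually_conj simp: eventually_False)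
qed

lemma filterlim_scaled_at_right_0:
  fixes t :: "nat \<Rightarrow> real"
  assumes "\<And>n. t n > 0" "filterlim t at_top sequentially" "c > 0"
  shows "filterlim (\<lambda>n. c / t n) (at_right 0) sequentially"
proof (rule tendsto_imp_filterlim_at_right)
  show "((\<lambda>n. c / t n) \<longlongrightarrow> 0) sequentially"
    by (rule tendsto_divide_0[OF tendsto_const filterlim_at_top_imp_at_infinity[OF assms(2)]])
  show "\<forall>\<^sub>F n in sequentially. 0 < c / t n"
    using assms by auto
qed

lemma frequently_at_right_0E:
  assumes "\<exists>\<^sub>F s in at_right (0::real). P s"
  obtains u where "\<And>k. u k > 0" "u \<longlonglongrightarrow> 0" "\<And>k. P (u k)"
proof -
  have "\<exists>y. 0 < y \<and> y < inverse (real (Suc k)) \<and> P y" for k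
  proof -
    have "\<not> (\<exists>b>0. \<forall>y>0. y < b \<longrightarrow> \<not> P y)"
      using assms unfolding frequently_def eventually_at_right_field by simp
    moreover have "inverse (real (Suc k)) > 0"
      by simp
    ultimately show ?thesis
      by blast
  qed
  then obtain u where u: "\<And>k. 0 < u k \<and> u k < inverse (real (Suc k)) \<and> P (u k)"
    by metis
  have "u \<longlonglongrightarrow> 0"
    by (rule tendsto_sandwich[OF _ _ tendsto_const LIMSEQ_inverse_real_of_nat])
      (use u in \<open>auto intro: always_eventually less_imp_le\<close>)
  with u that show ?thesis
    by blast
qed

lemma ereal_divide_change_denom:
  fixes e :: ereal
  assumes "0 \<le> e" "a > 0" "b > 0"
  shows "e / ereal a = e / ereal b * ereal (b / a)"
  using assms by (cases e) auto

lemma ereal_le_INF_mult: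
  fixes a :: ereal
  assumes "\<And>T. T \<in> A \<Longrightarrow> a \<le> f T * ereal k" "k > 0"
  shows "a \<le> (INF T\<in>A. f T) * ereal k"
proof -
  have "a * ereal (1 / k) \<le> (INF T\<in>A. f T)"
  proof (rule INF_greatest)
    fix T assume "T \<in> A"
    then have "a * ereal (1 / k) \<le> f T * ereal k * ereal (1 / k)"
      using assms by (intro ereal_mult_right_mono) auto
    then show "a * ereal (1 / k) \<le> f T"
      using assms(2) by (simp add: mult.assoc)
  qed
  then have "a * ereal (1 / k) * ereal k \<le> (INF T\<in>A. f T) * ereal k"
    using assms(2) by (intro ereal_mult_right_mono) auto
  then show ?thesis
    using assms(2) by (simp add: mult.assoc)
qed

lemma ereal_le_of_le_mult_1_plus:
  fixes A B :: ereal
  assumes "\<And>d. d > 0 \<Longrightarrow> A \<le> B * ereal (1 + d)" "0 \<le> B"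
  shows "A \<le> B"
proof (cases B)
  case (real b)
  then have b: "b \<ge> 0" using assms by auto
  show ?thesis
  proof (cases A)
    case (real a)
    have "a \<le> b"
    proof (rule field_le_epsilon)
      fix e :: real assume e: "e > 0"
      have "a \<le> b * (1 + e / (b + 1))"
        using assms(1)[of "e / (b + 1)"] e b \<open>A = ereal a\<close> \<open>B = ereal b\<close> by auto
      also have "\<dots> = b + e * (b / (b + 1))"
        using b by (simp add: field_simps)
      also have "\<dots> \<le> b + e * 1"
        using b e by (intro add_left_mono mult_left_mono) auto
      finally show "a \<le> b + e"
        by simp
    qed
    then show ?thesis
      using real \<open>B = ereal b\<close> by auto
  next
    case PInf
    then show ?thesis
      using assms(1)[of 1] \<open>B = ereal b\<close> by auto
  qed auto
qed (use assms(2) in auto)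

lemma Limsup_le_Limsup_mult_tendsto_1:
  fixes a b :: "'b \<Rightarrow> ereal" and \<rho> :: "'b \<Rightarrow> real"
  assumes "F \<noteq> bot" "(\<rho> \<longlongrightarrow> 1) F"
    and "\<forall>\<^sub>F x in F. a x \<le> b x * ereal (\<rho> x)" "\<forall>\<^sub>F x in F. 0 \<le> b x"
  shows "Limsup F a \<le> Limsup F b"
proof (rule ereal_le_of_le_mult_1_plus)
  show "0 \<le> Limsup F b"
    using assms(1,4) by (rule le_Limsup)
  fix d :: real assume d: "d > 0"
  have "\<forall>\<^sub>F x in F. \<rho> x < 1 + d"
    using order_tendstoD(2)[OF assms(2), of "1 + d"] d by simp
  then have "\<forall>\<^sub>F x in F. a x \<le> b x * ereal (1 + d)"
    using assms(3,4)
  proof eventually_elim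
    case (elim x)
    then show ?case
      by (meson dual_order.trans ereal_less_eq(3) ereal_mult_left_mono less_imp_le)
  qed
  then have "Limsup F a \<le> Limsup F (\<lambda>x. b x * ereal (1 + d))"
    by (rule Limsup_mono)
  also have "\<dots> = Limsup F b * ereal (1 + d)"
    using assms(1) d by (intro Limsup_ereal_mult_right) auto
  finally show "Limsup F a \<le> Limsup F b * ereal (1 + d)" .
qed

lemma Liminf_le_Liminf_mult_tendsto_1:
  fixes a b :: "'b \<Rightarrow> ereal" and \<rho> :: "'b \<Rightarrow> real"
  assumes "F \<noteq> bot" "(\<rho> \<longlongrightarrow> 1) F"
    and "\<forall>\<^sub>F x in F. a x \<le> b x * ereal (\<rho> x)" "\<forall>\<^sub>F x in F. 0 \<le> b x"
  shows "Liminf F a \<le> Liminf F b"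
proof (rule ereal_le_of_le_mult_1_plus)
  show "0 \<le> Liminf F b"
    using assms(4) by (rule Liminf_bounded)
  fix d :: real assume d: "d > 0"
  have "\<forall>\<^sub>F x in F. \<rho> x < 1 + d"
    using order_tendstoD(2)[OF assms(2), of "1 + d"] d by simp
  then have "\<forall>\<^sub>F x in F. a x \<le> b x * ereal (1 + d)"
    using assms(3,4)
  proof eventually_elim
    case (elim x)
    then show ?case
      by (meson dual_order.trans ereal_less_eq(3) ereal_mult_left_mono less_imp_le)
  qed
  then have "Liminf F a \<le> Liminf F (\<lambda>x. b x * ereal (1 + d))"
    by (rule Liminf_mono)
  also have "\<dots> = Liminf F b * ereal (1 + d)"
    using assms(1) d by (intro Liminf_ereal_mult_right) auto
  finally show "Liminf F a \<le> Liminf F b * ereal (1 + d)" .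
qed

lemma eventually_at_right_0_less_1: "\<forall>\<^sub>F r in at_right (0::real). 0 < r \<and> r < 1"
  unfolding eventually_at_right_field by (auto intro!: exI[of _ 1])

lemma at_right_0_halved: "filtermap (\<lambda>r. r / 2) (at_right 0) = at_right (0::real)"
proof -
  have "(\<lambda>r. r / 2) = (*) (1 / 2 :: real)"
    by (rule ext) simp
  then show ?thesis
    using filtermap_times_pos_at_right[of "1 / 2 :: real" 0] by (simp only: mult_zero_right)
qed

lemma inj_halve: "inj (\<lambda>r::real. r / 2)"
  by (rule injI) simp

lemma filterlim_halve_at_right_0: "filterlim (\<lambda>r. r / 2) (at_right 0) (at_right (0::real))"
  unfolding filterlim_def at_right_0_halved by (rule order.refl)

lemma tendsto_ln_ratio_halved: "((\<lambda>r. ln (1 / (r / 2)) / ln (1 / r)) \<longlongrightarrow> 1) (at_right (0::real))"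
  by real_asymp

lemma Limsup_le_Limsup_halved:
  fixes A B :: "real \<Rightarrow> ereal"
  assumes "\<And>r. 0 < r \<Longrightarrow> r < 1 \<Longrightarrow> A r \<le> B (r / 2) * ereal (ln (1 / (r / 2)) / ln (1 / r))"
    and "\<And>r. 0 < r \<Longrightarrow> r < 1 \<Longrightarrow> 0 \<le> B r"
  shows "Limsup (at_right 0) A \<le> Limsup (at_right 0) B"
proof -
  have "\<forall>\<^sub>F r in at_right 0. 0 \<le> B r"
    using eventually_at_right_0_less_1 by eventually_elim (use assms(2) in blast)
  then have "\<forall>\<^sub>F r in at_right 0. 0 \<le> B (r / 2)"
    using filterlim_halve_at_right_0 by (rule eventually_compose_filterlim)
  moreover have "\<forall>\<^sub>F r in at_right 0. A r \<le> B (r / 2) * ereal (ln (1 / (r / 2)) / ln (1 / r))"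
    using eventually_at_right_0_less_1 by eventually_elim (use assms(1) in blast)
  ultimately have "Limsup (at_right 0) A \<le> Limsup (at_right 0) (\<lambda>r. B (r / 2))"
    by (intro Limsup_le_Limsup_mult_tendsto_1[OF _ tendsto_ln_ratio_halved]) simp_all
  also have "\<dots> = Limsup (at_right 0) B"
    using Limsup_filtermap_eq[OF inj_halve, of "at_right 0" B] by (simp only: at_right_0_halved)
  finally show ?thesis .
qed

lemma Liminf_le_Liminf_halved:
  fixes A B :: "real \<Rightarrow> ereal"
  assumes "\<And>r. 0 < r \<Longrightarrow> r < 1 \<Longrightarrow> A r \<le> B (r / 2) * ereal (ln (1 / (r / 2)) / ln (1 / r))"
    and "\<And>r. 0 < r \<Longrightarrow> r < 1 \<Longrightarrow> 0 \<le> B r"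
  shows "Liminf (at_right 0) A \<le> Liminf (at_right 0) B"
proof -
  have "\<forall>\<^sub>F r in at_right 0. 0 \<le> B r"
    using eventually_at_right_0_less_1 by eventually_elim (use assms(2) in blast)
  then have "\<forall>\<^sub>F r in at_right 0. 0 \<le> B (r / 2)"
    using filterlim_halve_at_right_0 by (rule eventually_compose_filterlim)
  moreover have "\<forall>\<^sub>F r in at_right 0. A r \<le> B (r / 2) * ereal (ln (1 / (r / 2)) / ln (1 / r))"
    using eventually_at_right_0_less_1 by eventually_elim (use assms(1) in blast)
  ultimately have "Liminf (at_right 0) A \<le> Liminf (at_right 0) (\<lambda>r. B (r / 2))"
    by (intro Liminf_le_Liminf_mult_tendsto_1[OF _ tendsto_ln_ratio_halved]) simp_all
  also have "\<dots> = Liminf (at_right 0) B"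
    using Liminf_filtermap_eq[OF inj_halve, of "at_right 0" B] by (simp only: at_right_0_halved)
  finally show ?thesis .
qed

section \<open>Gromov--Hausdorff approximations and covering numbers\<close>

definition GH_approx ::
  "'a set \<Rightarrow> ('a \<Rightarrow> 'a \<Rightarrow> real) \<Rightarrow> 'a \<Rightarrow> 'b set \<Rightarrow> ('b \<Rightarrow> 'b \<Rightarrow> real) \<Rightarrow> 'b
   \<Rightarrow> real \<Rightarrow> real \<Rightarrow> ('a \<Rightarrow> 'b) \<Rightarrow> bool" where
  "GH_approx X dX q Y dY p R \<epsilon> f \<longleftrightarrow>
     (\<forall>a\<in>{a\<in>X. dX q a < R}. f a \<in> Y) \<and> f q = p \<and>
     (\<forall>a\<in>{a\<in>X. dX q a < R}. \<forall>b\<in>{b\<in>X. dX q b < R}. \<bar>dY (f a) (f b) - dX a b\<bar> < \<epsilon>) \<and>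
     (\<forall>y\<in>{y\<in>Y. dY p y < R - \<epsilon>}. \<exists>a\<in>{a\<in>X. dX q a < R}. dY (f a) y < \<epsilon>)"

lemma pGH_conv_iff_GH_approx:
  "pGH_conv Xs ds ps Y dY q \<longleftrightarrow>
     (\<forall>R>0. \<forall>\<epsilon>>0. \<forall>\<^sub>F n in sequentially. \<exists>f. GH_approx (Xs n) (ds n) (ps n) Y dY q R \<epsilon> f)"
  by (simp only: pGH_conv_def GH_approx_def)

lemma GH_approxD:
  assumes "GH_approx X dX q Y dY p R \<epsilon> f"
  shows "\<And>a. a \<in> X \<Longrightarrow> dX q a < R \<Longrightarrow> f a \<in> Y" and "f q = p"
    and "\<And>a b. a \<in> X \<Longrightarrow> b \<in> X \<Longrightarrow> dX q a < R \<Longrightarrow> dX q b < R \<Longrightarrow>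
           \<bar>dY (f a) (f b) - dX a b\<bar> < \<epsilon>"
    and "\<And>y. y \<in> Y \<Longrightarrow> dY p y < R - \<epsilon> \<Longrightarrow> \<exists>a\<in>X. dX q a < R \<and> dY (f a) y < \<epsilon>"
  using assms unfolding GH_approx_def by auto

lemma GH_approx_cover_image:
  assumes X: "Metric_space X dX" and Y: "Metric_space Y dY" and q: "q \<in> X"
    and f: "GH_approx X dX q Y dY p (3 + r) e f" and e: "0 < e" "2 * e < r"
    and C: "C \<subseteq> X" "{a\<in>X. dX q a \<le> 1 + 2 * e} \<subseteq> (\<Union>c\<in>C. {a\<in>X. dX c a < r - 2 * e})"
    and y: "y \<in> Y" "dY p y \<le> 1"
  shows "\<exists>c\<in>C. dX q c < 3 + r \<and> dY (f c) y < r"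
proof -
  interpret X: Metric_space X dX by (fact X)
  interpret Y: Metric_space Y dY by (fact Y)
  note f = GH_approxD[OF f]
  have q_dom: "dX q q < 3 + r"
    using q e by simp
  have "dY p y < 3 + r - e"
    using y(2) e by simp
  then obtain a where a: "a \<in> X" "dX q a < 3 + r" "dY (f a) y < e"
    using f(4)[OF y(1)] by blast
  have fa: "f a \<in> Y" and p: "p \<in> Y"
    using f(1)[OF a(1,2)] f(1)[OF q q_dom] f(2) by auto
  have "dY p (f a) \<le> dY p y + dY y (f a)"
    using y p fa by (intro Y.triangle) auto
  moreover have "\<bar>dY p (f a) - dX q a\<bar> < e"
    using f(3)[OF q a(1) q_dom a(2)] f(2) by simp
  ultimately have qa: "dX q a < 1 + 2 * e"
    using y a(3) Y.commute[of y "f a"] by auto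
  then have "a \<in> (\<Union>c\<in>C. {a\<in>X. dX c a < r - 2 * e})"
    using C(2) a(1) by auto
  then obtain c where c: "c \<in> C" "dX c a < r - 2 * e"
    by blast
  have cX: "c \<in> X"
    using c(1) C(1) by auto
  have "dX q c \<le> dX q a + dX a c"
    using q a(1) cX by (intro X.triangle) auto
  then have c_dom: "dX q c < 3 + r"
    using qa c(2) X.commute[of a c] by simp
  have "dY (f c) y \<le> dY (f c) (f a) + dY (f a) y"
    using f(1)[OF cX c_dom] fa y by (intro Y.triangle) auto
  moreover have "\<bar>dY (f c) (f a) - dX c a\<bar> < e"
    by (rule f(3)[OF cX a(1) c_dom a(2)])
  ultimately have "dY (f c) y < r"
    using a(3) c(2) by linarith
  with c(1) c_dom show ?thesis
    by blast
qed

lemma covnum_le_of_GH_approx: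
  assumes X: "Metric_space X dX" and Y: "Metric_space Y dY" and q: "q \<in> X"
    and f: "GH_approx X dX q Y dY p (3 + r) e f" and e: "0 < e" "2 * e < r"
  shows "covnum Y dY r {y\<in>Y. dY p y \<le> 1} \<le> covnum X dX (r - 2 * e) {a\<in>X. dX q a \<le> 1 + 2 * e}"
proof (rule covnum_le_covnum)
  fix C assume C: "finite C" "C \<subseteq> X" "{a\<in>X. dX q a \<le> 1 + 2 * e} \<subseteq> (\<Union>c\<in>C. {a\<in>X. dX c a < r - 2 * e})"
  define C' where "C' = {c\<in>C. dX q c < 3 + r}"
  have "finite (f ` C')" "f ` C' \<subseteq> Y" "card (f ` C') \<le> card C"
    using C GH_approxD(1)[OF f] card_image_le[of C' f] card_mono[of C C'] by (auto simp: C'_def)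
  moreover have "{y\<in>Y. dY p y \<le> 1} \<subseteq> (\<Union>c\<in>f ` C'. {z\<in>Y. dY c z < r})"
  proof
    fix y assume y: "y \<in> {y\<in>Y. dY p y \<le> 1}"
    then obtain c where "c \<in> C" "dX q c < 3 + r" "dY (f c) y < r"
      using GH_approx_cover_image[OF X Y q f e C(2,3)] by blast
    with y show "y \<in> (\<Union>c\<in>f ` C'. {z\<in>Y. dY c z < r})"
      by (auto simp: C'_def)
  qed
  ultimately show "\<exists>C'. finite C' \<and> C' \<subseteq> Y \<and> card C' \<le> card C \<and>
      {y\<in>Y. dY p y \<le> 1} \<subseteq> (\<Union>c\<in>C'. {y\<in>Y. dY c y < r})"
    by blast
qed

lemma GH_approx_cover_preimage:
  assumes X: "Metric_space X dX" and Y: "Metric_space Y dY" and q: "q \<in> X"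
    and f: "GH_approx X dX q Y dY p (3 + r) e f" and e: "0 < e" and r: "0 < r"
    and D: "D \<subseteq> Y" "{y\<in>Y. dY p y \<le> 1} \<subseteq> (\<Union>c\<in>D. {y\<in>Y. dY c y < r})"
    and a: "a \<in> X" "dX q a \<le> 1 - e"
  shows "\<exists>c\<in>D. dY p c < 1 + r \<and>
           (\<forall>b\<in>X. dX q b < 3 + r \<longrightarrow> dY (f b) c < e \<longrightarrow> dX b a < r + 2 * e)"
proof -
  interpret X: Metric_space X dX by (fact X)
  interpret Y: Metric_space Y dY by (fact Y)
  note f = GH_approxD[OF f]
  have q_dom: "dX q q < 3 + r" and a_dom: "dX q a < 3 + r"
    using q a e r by auto
  have fa: "f a \<in> Y" and p: "p \<in> Y"
    using f(1)[OF a(1) a_dom] f(1)[OF q q_dom] f(2) by auto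
  have "\<bar>dY p (f a) - dX q a\<bar> < e"
    using f(3)[OF q a(1) q_dom a_dom] f(2) by simp
  then have pfa: "dY p (f a) \<le> 1"
    using a by auto
  then have "f a \<in> (\<Union>c\<in>D. {y\<in>Y. dY c y < r})"
    using D(2) fa by auto
  then obtain c where c: "c \<in> D" "dY c (f a) < r"
    by blast
  have cY: "c \<in> Y"
    using c(1) D(1) by auto
  have "dY p c \<le> dY p (f a) + dY (f a) c"
    using p cY fa by (intro Y.triangle) auto
  then have "dY p c < 1 + r"
    using pfa c(2) Y.commute[of c "f a"] by auto
  moreover have "dX b a < r + 2 * e" if b: "b \<in> X" "dX q b < 3 + r" "dY (f b) c < e" for b
  proof -
    have "dY (f b) (f a) \<le> dY (f b) c + dY c (f a)"
      using f(1)[OF b(1,2)] cY fa by (intro Y.triangle) auto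
    moreover have "\<bar>dY (f b) (f a) - dX b a\<bar> < e"
      by (rule f(3)[OF b(1) a(1) b(2) a_dom])
    ultimately show ?thesis
      using b(3) c(2) by linarith
  qed
  ultimately show ?thesis
    using c(1) by blast
qed

lemma covnum_ge_of_GH_approx:
  assumes X: "Metric_space X dX" and Y: "Metric_space Y dY" and q: "q \<in> X"
    and f: "GH_approx X dX q Y dY p (3 + r) e f" and e: "0 < e" "e < 2" and r: "0 < r"
  shows "covnum X dX (r + 2 * e) {a\<in>X. dX q a \<le> 1 - e} \<le> covnum Y dY r {y\<in>Y. dY p y \<le> 1}"
proof (rule covnum_le_covnum)
  fix D assume D: "finite D" "D \<subseteq> Y" "{y\<in>Y. dY p y \<le> 1} \<subseteq> (\<Union>c\<in>D. {y\<in>Y. dY c y < r})"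
  define D' where "D' = {c\<in>D. dY p c < 1 + r}"
  have "\<forall>c\<in>D'. \<exists>b\<in>X. dX q b < 3 + r \<and> dY (f b) c < e"
    using GH_approxD(4)[OF f] D(2) e by (auto simp: D'_def)
  then obtain g where g: "\<And>c. c \<in> D' \<Longrightarrow> g c \<in> X \<and> dX q (g c) < 3 + r \<and> dY (f (g c)) c < e"
    by metis
  have "finite (g ` D')" "g ` D' \<subseteq> X" "card (g ` D') \<le> card D"
    using D g card_image_le[of D' g] card_mono[of D D'] by (auto simp: D'_def)
  moreover have "{a\<in>X. dX q a \<le> 1 - e} \<subseteq> (\<Union>c\<in>g ` D'. {b\<in>X. dX c b < r + 2 * e})"
  proof
    fix a assume "a \<in> {a\<in>X. dX q a \<le> 1 - e}"
    then obtain c where "c \<in> D" "dY p c < 1 + r"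
      and near: "\<forall>b\<in>X. dX q b < 3 + r \<longrightarrow> dY (f b) c < e \<longrightarrow> dX b a < r + 2 * e"
      using GH_approx_cover_preimage[OF X Y q f e(1) r D(2,3)] by blast
    then have "c \<in> D'"
      by (simp add: D'_def)
    then have "dX (g c) a < r + 2 * e"
      using near g by blast
    with \<open>c \<in> D'\<close> \<open>a \<in> {a\<in>X. dX q a \<le> 1 - e}\<close>
    show "a \<in> (\<Union>c\<in>g ` D'. {b\<in>X. dX c b < r + 2 * e})"
      by auto
  qed
  ultimately show "\<exists>D'. finite D' \<and> D' \<subseteq> X \<and> card D' \<le> card D \<and>
      {a\<in>X. dX q a \<le> 1 - e} \<subseteq> (\<Union>c\<in>D'. {b\<in>X. dX c b < r + 2 * e})"
    by blast
qed

lemma Metric_space_scaled_dist: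
  assumes "t > 0"
  shows "Metric_space UNIV (\<lambda>a b :: 'a::metric_space. t * dist a b)"
proof
  show "t * dist a c \<le> t * dist a b + t * dist b c" for a b c :: 'a
    using dist_triangle[of a c b] assms by (simp add: distrib_left[symmetric])
qed (use assms in \<open>auto simp: dist_commute\<close>)

lemma cball_eq_scaled_dist:
  assumes "t > 0"
  shows "{a. t * dist x a \<le> c} = cball x (c / t)"
  using assms by (auto simp: pos_le_divide_eq mult.commute)

lemma eventually_tangent_covnum_le:
  fixes x :: "'a::metric_space"
  assumes S: "Metric_space S dT"
    and conv: "pGH_conv (\<lambda>n. UNIV) (\<lambda>n a b. t n * dist a b) (\<lambda>n. x) S dT p"
    and t: "\<And>n. t n > 0" and e: "0 < e" "2 * e < r"
  shows "\<forall>\<^sub>F n in sequentially. covnum S dT r {y\<in>S. dT p y \<le> 1}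
           \<le> covnum UNIV dist ((r - 2 * e) / t n) (cball x ((1 + 2 * e) / t n))"
proof -
  have "\<forall>\<^sub>F n in sequentially. \<exists>f. GH_approx UNIV (\<lambda>a b. t n * dist a b) x S dT p (3 + r) e f"
    using conv e unfolding pGH_conv_iff_GH_approx by auto
  then show ?thesis
  proof eventually_elim
    case (elim n)
    then obtain f where f: "GH_approx UNIV (\<lambda>a b. t n * dist a b) x S dT p (3 + r) e f" ..
    have "covnum S dT r {y\<in>S. dT p y \<le> 1}
        \<le> covnum UNIV (\<lambda>a b. t n * dist a b) (r - 2 * e) {a\<in>UNIV. t n * dist x a \<le> 1 + 2 * e}"
      by (rule covnum_le_of_GH_approx[OF Metric_space_scaled_dist[OF t] S _ f e]) simp
    then show ?case
      using t[of n] by (simp add: covnum_rescale cball_eq_scaled_dist)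
  qed
qed

lemma eventually_covnum_le_tangent:
  fixes x :: "'a::metric_space"
  assumes S: "Metric_space S dT"
    and conv: "pGH_conv (\<lambda>n. UNIV) (\<lambda>n a b. t n * dist a b) (\<lambda>n. x) S dT p"
    and t: "\<And>n. t n > 0" and e: "0 < e" "e < 2" and r: "0 < r"
  shows "\<forall>\<^sub>F n in sequentially. covnum UNIV dist ((r + 2 * e) / t n) (cball x ((1 - e) / t n))
           \<le> covnum S dT r {y\<in>S. dT p y \<le> 1}"
proof -
  have "\<forall>\<^sub>F n in sequentially. \<exists>f. GH_approx UNIV (\<lambda>a b. t n * dist a b) x S dT p (3 + r) e f"
    using conv e r unfolding pGH_conv_iff_GH_approx by auto
  then show ?thesis
  proof eventually_elim
    case (elim n)
    then obtain f where f: "GH_approx UNIV (\<lambda>a b. t n * dist a b) x S dT p (3 + r) e f" ..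
    have "covnum UNIV (\<lambda>a b. t n * dist a b) (r + 2 * e) {a\<in>UNIV. t n * dist x a \<le> 1 - e}
        \<le> covnum S dT r {y\<in>S. dT p y \<le> 1}"
      by (rule covnum_ge_of_GH_approx[OF Metric_space_scaled_dist[OF t] S _ f e r]) simp
    then show ?case
      using t[of n] by (simp add: covnum_rescale cball_eq_scaled_dist)
  qed
qed

lemma tangentsE:
  assumes "T \<in> tangents x"
  obtains S dT p t where "T = (S, dT, p)" "Metric_space S dT" "\<And>n. t n > 0"
    "filterlim t at_top sequentially"
    "pGH_conv (\<lambda>n. UNIV) (\<lambda>n a b. t n * dist a b) (\<lambda>n. x) S dT p"
proof -
  obtain S dT p where T: "T = (S, dT, p)"
    by (cases T) blast
  with assms that show ?thesis
    unfolding tangents_def by blast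
qed

lemma tangentsI:
  fixes x :: "'a::metric_space"
  assumes "Metric_space S dT" "Metric_space.mcomplete S dT" "p \<in> S"
    and s: "\<And>n. s n > 0" "s \<longlonglongrightarrow> 0"
    and "pGH_conv (\<lambda>n. UNIV) (\<lambda>n a b. 1 / s n * dist a b) (\<lambda>n. x) S dT p"
  shows "(S, dT, p) \<in> tangents x"
proof -
  have "filterlim (\<lambda>n. inverse (s n)) at_top sequentially"
    using s by (intro filterlim_inverse_at_top) auto
  with assms show ?thesis
    unfolding tangents_def by (auto intro!: exI[of _ "\<lambda>n. 1 / s n"] simp: inverse_eq_divide)
qed

lemma covnum_T_unit_cball: "covnum_T (S, dT, p) r (unit_cball (S, dT, p)) = covnum S dT r {y\<in>S. dT p y \<le> 1}"
  by (simp add: covnum_T_def unit_cball_def)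

lemma frequently_tangent_covnum_le:
  fixes x :: "'a::metric_space"
  assumes "T \<in> tangents x" and r: "0 < r" "r < 1"
  shows "\<exists>\<^sub>F s in at_right 0. covnum_T T r (unit_cball T) \<le> covnum UNIV dist (r / 2 * s) (cball x s)"
proof -
  obtain S dT p t where T: "T = (S, dT, p)" "Metric_space S dT" "\<And>n. t n > 0"
    "filterlim t at_top sequentially" "pGH_conv (\<lambda>n. UNIV) (\<lambda>n a b. t n * dist a b) (\<lambda>n. x) S dT p"
    using assms(1) by (rule tangentsE) blast
  define e where "e = r / 8"
  define s where "s n = (1 + 2 * e) / t n" for n
  have mono: "covnum UNIV dist ((r - 2 * e) / t n) (cball x (s n)) \<le> covnum UNIV dist (r / 2 * s n) (cball x (s n))" for n
    by (rule covnum_mono) (use T(3)[of n] r in \<open>simp_all add: s_def e_def field_simps\<close>)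
  have "\<forall>\<^sub>F n in sequentially. covnum_T T r (unit_cball T) \<le> covnum UNIV dist ((r - 2 * e) / t n) (cball x (s n))"
    unfolding T(1) covnum_T_unit_cball s_def
    by (rule eventually_tangent_covnum_le[OF T(2) T(5) T(3)]) (use r in \<open>auto simp: e_def\<close>)
  then have "\<forall>\<^sub>F n in sequentially. covnum_T T r (unit_cball T) \<le> covnum UNIV dist (r / 2 * s n) (cball x (s n))"
    by (rule eventually_mono) (erule order.trans[OF _ mono])
  moreover have "filterlim s (at_right 0) sequentially"
    unfolding s_def using T(3,4) r by (intro filterlim_scaled_at_right_0) (auto simp: e_def)
  ultimately show ?thesis
    by (intro frequently_of_filterlim[where u = s])
qed

lemma frequently_covnum_le_tangent:
  fixes x :: "'a::metric_space"
  assumes "T \<in> tangents x" and r: "0 < r" "r < 1"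
  shows "\<exists>\<^sub>F s in at_right 0. covnum UNIV dist (r * s) (cball x s) \<le> covnum_T T (r / 2) (unit_cball T)"
proof -
  obtain S dT p t where T: "T = (S, dT, p)" "Metric_space S dT" "\<And>n. t n > 0"
    "filterlim t at_top sequentially" "pGH_conv (\<lambda>n. UNIV) (\<lambda>n a b. t n * dist a b) (\<lambda>n. x) S dT p"
    using assms(1) by (rule tangentsE) blast
  define e where "e = r / 8"
  define s where "s n = (1 - e) / t n" for n
  have mono: "covnum UNIV dist (r * s n) (cball x (s n)) \<le> covnum UNIV dist ((r / 2 + 2 * e) / t n) (cball x (s n))" for n
    by (rule covnum_mono) (use T(3)[of n] r in \<open>simp_all add: s_def e_def field_simps\<close>)
  have "\<forall>\<^sub>F n in sequentially. covnum UNIV dist ((r / 2 + 2 * e) / t n) (cball x (s n)) \<le> covnum_T T (r / 2) (unit_cball T)"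
    unfolding T(1) covnum_T_unit_cball s_def
    by (rule eventually_covnum_le_tangent[OF T(2) T(5) T(3)]) (use r in \<open>auto simp: e_def\<close>)
  then have "\<forall>\<^sub>F n in sequentially. covnum UNIV dist (r * s n) (cball x (s n)) \<le> covnum_T T (r / 2) (unit_cball T)"
    by (rule eventually_mono) (erule order.trans[OF mono])
  moreover have "filterlim s (at_right 0) sequentially"
    unfolding s_def using T(3,4) r by (intro filterlim_scaled_at_right_0) (auto simp: e_def)
  ultimately show ?thesis
    by (intro frequently_of_filterlim[where u = s])
qed

section \<open>Complete models of limit pseudometrics\<close>

lemma inj_countable_fun_to_real: "\<exists>g :: ('i::countable \<Rightarrow> real) \<Rightarrow> real. inj g"
proof -
  obtain e :: "nat set \<Rightarrow> real" where e: "bij e"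
    using nat_sets_eqpoll_reals unfolding eqpoll_def by blast
  define A where "A \<phi> = {prod_encode (to_nat i, n) | i n. n \<in> inv e (\<phi> i)}" for \<phi> :: "'i \<Rightarrow> real"
  have A_iff: "prod_encode (to_nat i, n) \<in> A \<phi> \<longleftrightarrow> n \<in> inv e (\<phi> i)" for \<phi> i n
    by (auto simp: A_def prod_encode_eq)
  have "inj (\<lambda>\<phi>. e (A \<phi>))"
  proof (rule injI, rule ext)
    fix \<phi> \<psi> i assume "e (A \<phi>) = e (A \<psi>)"
    then have "A \<phi> = A \<psi>"
      using e by (simp add: bij_def inj_eq)
    then have "inv e (\<phi> i) = inv e (\<psi> i)"
      using A_iff[of i _ \<phi>] A_iff[of i _ \<psi>] by blast
    then show "\<phi> i = \<psi> i"
      using e by (metis bij_inv_eq_iff)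
  qed
  then show ?thesis by blast
qed

lemma Metric_space_image_inj:
  assumes MS: "Metric_space M d" and inj: "inj_on g M"
  shows "Metric_space (g ` M) (\<lambda>a b. d (inv_into M g a) (inv_into M g b))"
proof -
  interpret Metric_space M d by (fact MS)
  show ?thesis
  proof
    fix a b assume "a \<in> g ` M" "b \<in> g ` M"
    then show "(d (inv_into M g a) (inv_into M g b) = 0) = (a = b)"
      using inj by (auto simp: inv_into_f_f)
  next
    fix a b c assume "a \<in> g ` M" "b \<in> g ` M" "c \<in> g ` M"
    then show "d (inv_into M g a) (inv_into M g c) \<le> d (inv_into M g a) (inv_into M g b) + d (inv_into M g b) (inv_into M g c)"
      by (intro triangle) (auto simp: inv_into_into)
  qed (auto simp: commute)
qed

lemma mcomplete_image_inj:
  assumes MS: "Metric_space M d" and mc: "Metric_space.mcomplete M d" and inj: "inj_on g M"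
  shows "Metric_space.mcomplete (g ` M) (\<lambda>a b. d (inv_into M g a) (inv_into M g b))"
proof -
  interpret M1: Metric_space M d by (fact MS)
  interpret M2: Metric_space "g ` M" "\<lambda>a b. d (inv_into M g a) (inv_into M g b)"
    by (rule Metric_space_image_inj[OF MS inj])
  show ?thesis
    unfolding M2.mcomplete_def
  proof (intro allI impI)
    fix \<sigma> assume "M2.MCauchy \<sigma>"
    then have c: "range \<sigma> \<subseteq> g ` M" "\<And>e. e > 0 \<Longrightarrow> \<exists>N. \<forall>n n'. N \<le> n \<longrightarrow> N \<le> n' \<longrightarrow>
        d (inv_into M g (\<sigma> n)) (inv_into M g (\<sigma> n')) < e"
      unfolding M2.MCauchy_def by auto
    define \<tau> where "\<tau> n = inv_into M g (\<sigma> n)" for n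
    have \<tau>M: "\<tau> n \<in> M" for n
      using c(1) unfolding \<tau>_def by (meson inv_into_into range_subsetD)
    have "M1.MCauchy \<tau>"
      unfolding M1.MCauchy_def using c(2) \<tau>M by (auto simp: \<tau>_def)
    then obtain l where "limitin M1.mtopology \<tau> l sequentially"
      using mc unfolding M1.mcomplete_def by blast
    then have l: "l \<in> M" "\<And>e. e > 0 \<Longrightarrow> \<forall>\<^sub>F n in sequentially. \<tau> n \<in> M \<and> d (\<tau> n) l < e"
      unfolding M1.limitin_metric by auto
    have "limitin M2.mtopology \<sigma> (g l) sequentially"
      unfolding M2.limitin_metric
    proof (intro conjI allI impI)
      show "g l \<in> g ` M" using l by blast
      fix e :: real assume "e > 0"
      show "\<forall>\<^sub>F n in sequentially. \<sigma> n \<in> g ` M \<and> d (inv_into M g (\<sigma> n)) (inv_into M g (g l)) < e"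
        using l(2)[OF \<open>e > 0\<close>] c(1) l(1) inj by (auto simp: \<tau>_def inv_into_f_f elim!: eventually_mono)
    qed
    then show "\<exists>x. limitin M2.mtopology \<sigma> x sequentially" by blast
  qed
qed

lemma pseudometric_quotient:
  fixes D :: "'i \<Rightarrow> 'i \<Rightarrow> real"
  assumes refl: "\<And>i. D i i = 0" and sym: "\<And>i j. D i j = D j i"
    and tri: "\<And>i j k. D i k \<le> D i j + D j k"
  obtains rep where "Metric_space (range rep) D" "\<And>i j. D (rep i) (rep j) = D i j"
proof -
  have zero_cong: "D i k = D j k" if "D i j = 0" for i j k
    using tri[where i = i and j = j and k = k] tri[where i = j and j = i and k = k] sym[of i j] that
    by linarith
  define rep where "rep i = (SOME j. D i j = 0)" for i
  have rep: "D i (rep i) = 0" for i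
    unfolding rep_def by (rule someI[of _ i]) (rule refl)
  have rep_eq: "rep i = rep j" if "D i j = 0" for i j
    unfolding rep_def using zero_cong[OF that] by presburger
  have D_rep: "D (rep i) (rep j) = D i j" for i j
    using zero_cong[OF rep[of i], of "rep j"] zero_cong[OF rep[of j], of i] sym by metis
  have "Metric_space (range rep) D"
  proof
    show "0 \<le> D i j" for i j
      using tri[where i = i and j = j and k = i] refl[of i] sym[of i j] by linarith
    show "D a b = 0 \<longleftrightarrow> a = b" if "a \<in> range rep" "b \<in> range rep" for a b
      using that rep_eq D_rep refl by auto
    show "D i j = D j i" for i j
      by (rule sym)
    show "D i k \<le> D i j + D j k" for i j k
      by (rule tri)
  qed
  then show ?thesis
    using D_rep by (rule that)
qed

text \<open>Tangents are carried by subsets of the reals, so completions are copied into \<open>\<real>\<close>.\<close>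

lemma complete_real_copy:
  fixes M :: "('i::countable \<Rightarrow> real) set"
  assumes "Metric_space M d" "Metric_space.mcomplete M d"
  obtains g :: "('i \<Rightarrow> real) \<Rightarrow> real" and dS where "Metric_space (g ` M) dS"
    "Metric_space.mcomplete (g ` M) dS" "\<And>u v. u \<in> M \<Longrightarrow> v \<in> M \<Longrightarrow> dS (g u) (g v) = d u v"
proof -
  obtain g :: "('i \<Rightarrow> real) \<Rightarrow> real" where "inj g"
    using inj_countable_fun_to_real by blast
  then have g: "inj_on g M"
    by (meson inj_on_subset subset_UNIV)
  show ?thesis
  proof
    show "Metric_space (g ` M) (\<lambda>a b. d (inv_into M g a) (inv_into M g b))"
      by (rule Metric_space_image_inj[OF assms(1) g])
    show "Metric_space.mcomplete (g ` M) (\<lambda>a b. d (inv_into M g a) (inv_into M g b))"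
      by (rule mcomplete_image_inj[OF assms g])
    show "d (inv_into M g (g u)) (inv_into M g (g v)) = d u v" if "u \<in> M" "v \<in> M" for u v
      using that g by simp
  qed
qed

lemma complete_real_model_of_pseudometric:
  fixes D :: "'i::countable \<Rightarrow> 'i \<Rightarrow> real"
  assumes "\<And>i. D i i = 0" "\<And>i j. D i j = D j i" "\<And>i j k. D i k \<le> D i j + D j k"
  obtains S :: "real set" and dS \<Psi> where "Metric_space S dS" "Metric_space.mcomplete S dS"
    "\<And>i. \<Psi> i \<in> S" "\<And>i j. dS (\<Psi> i) (\<Psi> j) = D i j"
    "\<And>z e. z \<in> S \<Longrightarrow> 0 < e \<Longrightarrow> \<exists>i. dS (\<Psi> i) z < e"
proof -
  obtain rep where rep: "Metric_space (range rep) D" "\<And>i j. D (rep i) (rep j) = D i j"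
    using pseudometric_quotient[of D, OF assms] by blast
  obtain F :: "'i \<Rightarrow> 'i \<Rightarrow> real" and m where m: "mcomplete_of m" "F \<in> range rep \<rightarrow> mspace m"
    and dense: "mtopology_of m closure_of F ` range rep = mspace m"
    and isom: "\<And>a b. a \<in> range rep \<Longrightarrow> b \<in> range rep \<Longrightarrow> mdist m (F a) (F b) = D a b"
    using Metric_space.metric_completion[OF rep(1)] by metis
  interpret M: Metric_space "mspace m" "mdist m" by simp
  obtain g :: "('i \<Rightarrow> real) \<Rightarrow> real" and dS where S: "Metric_space (g ` mspace m) dS"
    "Metric_space.mcomplete (g ` mspace m) dS"
    and dS: "\<And>u v. u \<in> mspace m \<Longrightarrow> v \<in> mspace m \<Longrightarrow> dS (g u) (g v) = mdist m u v"
    using complete_real_copy[of "mspace m" "mdist m"] m(1) by (auto simp: mcomplete_of_def)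
  have F_rep: "F (rep i) \<in> mspace m" for i
    using m(2) by auto
  show ?thesis
  proof (rule that[OF S])
    show "g (F (rep i)) \<in> g ` mspace m" for i
      using F_rep by simp
    show "dS (g (F (rep i))) (g (F (rep j))) = D i j" for i j
      using F_rep by (simp add: dS isom rep(2))
    fix z and e :: real assume z: "z \<in> g ` mspace m" and e: "0 < e"
    then obtain w where w: "w \<in> mspace m" "z = g w"
      by blast
    then have "w \<in> M.mtopology closure_of F ` range rep"
      using dense by (simp add: mtopology_of_def)
    then obtain i where "F (rep i) \<in> M.mball w e"
      using e unfolding M.metric_closure_of by blast
    then have "dS (g (F (rep i))) z < e"
      using w F_rep by (simp add: dS M.commute)
    then show "\<exists>i. dS (g (F (rep i))) z < e" ..
  qed
qed

lemma diagonal_subseq_convergent: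
  fixes f :: "nat \<Rightarrow> 'i::countable \<Rightarrow> real"
  assumes "\<And>i. bounded (range (\<lambda>k. f k i))"
  obtains \<sigma> where "strict_mono \<sigma>" "\<And>i. convergent (\<lambda>k. f (\<sigma> k) i)"
proof -
  define P where "P n r \<longleftrightarrow> convergent (\<lambda>k. f (r k) (from_nat n))" for n and r :: "nat \<Rightarrow> nat"
  interpret subseqs P
  proof
    fix n and r :: "nat \<Rightarrow> nat"
    have "bounded (range (\<lambda>k. f (r k) (from_nat n)))"
      using assms by (rule bounded_subset) auto
    then obtain l r' where "strict_mono r'" "((\<lambda>k. f (r k) (from_nat n)) \<circ> r') \<longlonglongrightarrow> l"
      using bounded_imp_convergent_subsequence by blast
    then show "\<exists>r'. strict_mono r' \<and> P n (r \<circ> r')"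
      by (auto simp: P_def convergent_def o_def)
  qed
  have "convergent (\<lambda>k. f (diagseq k) i)" for i
  proof -
    have "P (to_nat i) (diagseq \<circ> (+) (Suc (to_nat i)))"
    proof (rule diagseq_holds)
      fix r s :: "nat \<Rightarrow> nat" and n assume "strict_mono r" "P n s"
      then show "P n (s \<circ> r)"
        unfolding P_def convergent_def o_def using LIMSEQ_subseq_LIMSEQ[of _ _ r] by (auto simp: o_def)
    qed
    then show ?thesis
      using convergent_ignore_initial_segment[of "\<lambda>k. f (diagseq k) i" "Suc (to_nat i)"]
      by (simp add: P_def o_def add.commute)
  qed
  with subseq_diagseq that show ?thesis by blast
qed

lemma subseq_dist_limits:
  fixes Q :: "nat \<Rightarrow> 'i::countable \<Rightarrow> 'a::metric_space"
  assumes t: "\<And>k. t k \<ge> 0" and bdd: "\<And>i j. bounded (range (\<lambda>k. t k * dist (Q k i) (Q k j)))"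
  obtains \<sigma> D where "strict_mono \<sigma>" "\<And>i j. (\<lambda>n. t (\<sigma> n) * dist (Q (\<sigma> n) i) (Q (\<sigma> n) j)) \<longlonglongrightarrow> D i j"
    "\<And>i. D i i = 0" "\<And>i j. D i j = D j i" "\<And>i j k. D i k \<le> D i j + D j k"
proof -
  obtain \<sigma> where \<sigma>: "strict_mono \<sigma>"
    "\<And>ij. convergent (\<lambda>n. t (\<sigma> n) * dist (Q (\<sigma> n) (fst ij)) (Q (\<sigma> n) (snd ij)))"
    using diagonal_subseq_convergent[of "\<lambda>k ij. t k * dist (Q k (fst ij)) (Q k (snd ij))"] bdd
    by blast
  define D where "D i j = lim (\<lambda>n. t (\<sigma> n) * dist (Q (\<sigma> n) i) (Q (\<sigma> n) j))" for i j
  have lim: "(\<lambda>n. t (\<sigma> n) * dist (Q (\<sigma> n) i) (Q (\<sigma> n) j)) \<longlonglongrightarrow> D i j" for i j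
    using \<sigma>(2)[of "(i, j)"] by (simp add: D_def convergent_LIMSEQ_iff)
  show ?thesis
  proof (rule that[OF \<sigma>(1) lim])
    show "D i i = 0" for i
      using lim[of i i] by (simp add: LIMSEQ_const_iff)
    show "D i j = D j i" for i j
      by (simp add: D_def dist_commute)
    show "D i k \<le> D i j + D j k" for i j k
    proof (rule LIMSEQ_le[OF lim tendsto_add[OF lim lim]], intro exI allI impI)
      fix n
      show "t (\<sigma> n) * dist (Q (\<sigma> n) i) (Q (\<sigma> n) k)
          \<le> t (\<sigma> n) * dist (Q (\<sigma> n) i) (Q (\<sigma> n) j) + t (\<sigma> n) * dist (Q (\<sigma> n) j) (Q (\<sigma> n) k)"
        using mult_left_mono[OF dist_triangle[of "Q (\<sigma> n) i" "Q (\<sigma> n) k" "Q (\<sigma> n) j"] t]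
        by (simp add: distrib_left)
    qed
  qed
qed

lemma bounded_scaled_dist:
  fixes Q :: "nat \<Rightarrow> 'i \<Rightarrow> 'a::metric_space"
  assumes s: "\<And>k. s k > 0" and Q: "\<And>k i. dist x (Q k i) \<le> c i * s k"
  shows "bounded (range (\<lambda>k. 1 / s k * dist (Q k i) (Q k j)))"
  unfolding bounded_real
proof (intro exI[of _ "c i + c j"] ballI, clarify)
  fix k
  have "dist (Q k i) (Q k j) \<le> (c i + c j) * s k"
    using dist_triangle3[of "Q k i" "Q k j" x] Q[of k i] Q[of k j] by (simp add: distrib_right)
  then show "\<bar>1 / s k * dist (Q k i) (Q k j)\<bar> \<le> c i + c j"
    using s[of k] by (simp add: divide_le_eq)
qed

lemma abs_scaled_dist_diff_le:
  fixes a b a' b' :: "'a::metric_space"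
  assumes "0 \<le> \<tau>"
  shows "\<bar>\<tau> * dist a' b' - \<tau> * dist a b\<bar> \<le> \<tau> * dist a' a + \<tau> * dist b' b"
proof -
  have "\<bar>dist a' b' - dist a b\<bar> \<le> dist a' a + dist b' b"
    using dist_triangle[of a' b' a] dist_triangle[of a b' b] dist_triangle[of a b a'] dist_triangle[of a' b b']
    by (simp add: dist_commute abs_le_iff)
  then have "\<tau> * \<bar>dist a' b' - dist a b\<bar> \<le> \<tau> * (dist a' a + dist b' b)"
    by (rule mult_left_mono) (rule assms)
  moreover have "\<bar>\<tau> * dist a' b' - \<tau> * dist a b\<bar> = \<tau> * \<bar>dist a' b' - dist a b\<bar>"
    using assms by (simp add: right_diff_distrib[symmetric] abs_mult)
  ultimately show ?thesis
    by (simp add: distrib_left)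
qed

lemma net_point_near:
  assumes S: "Metric_space S dT" and \<Psi>: "\<And>i. \<Psi> i \<in> S"
    and \<Psi>_dense: "\<And>z e. z \<in> S \<Longrightarrow> 0 < e \<Longrightarrow> \<exists>i. dT (\<Psi> i) z < e" and \<epsilon>: "0 < \<epsilon>"
    and inner: "\<And>w. w \<in> W \<Longrightarrow> dT (\<Psi> i\<^sub>0) (\<Psi> w) < R \<Longrightarrow> \<tau> * dist x (P w) < R"
    and net_dense: "\<And>j. dT (\<Psi> i\<^sub>0) (\<Psi> j) < R \<Longrightarrow> \<exists>w\<in>W. dT (\<Psi> w) (\<Psi> j) \<le> \<epsilon> / 8"
    and y: "y \<in> S" "dT (\<Psi> i\<^sub>0) y < R - \<epsilon>"
  obtains w where "w \<in> W" "\<tau> * dist x (P w) < R" "dT (\<Psi> w) y \<le> \<epsilon> / 4"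
proof -
  interpret S: Metric_space S dT by (fact S)
  obtain j where j: "dT (\<Psi> j) y < \<epsilon> / 8"
    using \<Psi>_dense[OF y(1), of "\<epsilon> / 8"] \<epsilon> by auto
  have "dT (\<Psi> i\<^sub>0) (\<Psi> j) \<le> dT (\<Psi> i\<^sub>0) y + dT y (\<Psi> j)"
    by (rule S.triangle) (use \<Psi> y in auto)
  then have j_near: "dT (\<Psi> i\<^sub>0) (\<Psi> j) < R - 7 * \<epsilon> / 8"
    using y j S.commute[of y "\<Psi> j"] by auto
  then obtain w where w: "w \<in> W" "dT (\<Psi> w) (\<Psi> j) \<le> \<epsilon> / 8"
    using net_dense \<epsilon> by force
  have "dT (\<Psi> i\<^sub>0) (\<Psi> w) \<le> dT (\<Psi> i\<^sub>0) (\<Psi> j) + dT (\<Psi> j) (\<Psi> w)"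
    by (rule S.triangle) (use \<Psi> in auto)
  then have "dT (\<Psi> i\<^sub>0) (\<Psi> w) < R"
    using j_near w(2) S.commute[of "\<Psi> j" "\<Psi> w"] \<epsilon> by linarith
  moreover have "dT (\<Psi> w) y \<le> dT (\<Psi> w) (\<Psi> j) + dT (\<Psi> j) y"
    by (rule S.triangle) (use \<Psi> y in auto)
  ultimately show ?thesis
    using that[OF w(1) inner[OF w(1)]] w(2) j by linarith
qed

lemma GH_approx_of_net:
  fixes x :: "'a::metric_space" and P :: "'i \<Rightarrow> 'a"
  assumes S: "Metric_space S dT" and \<Psi>: "\<And>i. \<Psi> i \<in> S"
    and \<Psi>_dense: "\<And>z e. z \<in> S \<Longrightarrow> 0 < e \<Longrightarrow> \<exists>i. dT (\<Psi> i) z < e"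
    and \<tau>: "0 \<le> \<tau>" and \<epsilon>: "0 < \<epsilon>" and base: "P i\<^sub>0 = x"
    and cover: "\<And>a. \<tau> * dist x a < R \<Longrightarrow> \<exists>w\<in>W. \<tau> * dist (P w) a < \<epsilon> / 8"
    and close: "\<And>v w. v \<in> insert i\<^sub>0 W \<Longrightarrow> w \<in> insert i\<^sub>0 W \<Longrightarrow>
                  \<bar>\<tau> * dist (P v) (P w) - dT (\<Psi> v) (\<Psi> w)\<bar> < \<epsilon> / 4"
    and inner: "\<And>w. w \<in> W \<Longrightarrow> dT (\<Psi> i\<^sub>0) (\<Psi> w) < R \<Longrightarrow> \<tau> * dist x (P w) < R"
    and net_dense: "\<And>j. dT (\<Psi> i\<^sub>0) (\<Psi> j) < R \<Longrightarrow> \<exists>w\<in>W. dT (\<Psi> w) (\<Psi> j) \<le> \<epsilon> / 8"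
  shows "\<exists>f. GH_approx UNIV (\<lambda>a b. \<tau> * dist a b) x S dT (\<Psi> i\<^sub>0) R \<epsilon> f"
proof -
  interpret S: Metric_space S dT by (fact S)
  define rp where "rp a = (if a = x then i\<^sub>0 else (SOME w. w \<in> W \<and> \<tau> * dist (P w) a < \<epsilon> / 8))" for a
  have rp: "rp a \<in> insert i\<^sub>0 W \<and> \<tau> * dist (P (rp a)) a < \<epsilon> / 8" if "\<tau> * dist x a < R" for a
  proof (cases "a = x")
    case False
    then show ?thesis
      using someI_ex[OF cover[OF that, unfolded Bex_def]] by (simp add: rp_def)
  qed (simp add: rp_def base \<epsilon>)
  show ?thesis
    unfolding GH_approx_def
  proof (intro exI[of _ "\<lambda>a. \<Psi> (rp a)"] conjI ballI)
    show "\<Psi> (rp a) \<in> S" for a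
      by (rule \<Psi>)
    show "\<Psi> (rp x) = \<Psi> i\<^sub>0"
      by (simp add: rp_def)
  next
    fix a b assume "a \<in> {a \<in> UNIV. \<tau> * dist x a < R}" "b \<in> {b \<in> UNIV. \<tau> * dist x b < R}"
    then have ra: "rp a \<in> insert i\<^sub>0 W" "\<tau> * dist (P (rp a)) a < \<epsilon> / 8"
      and rb: "rp b \<in> insert i\<^sub>0 W" "\<tau> * dist (P (rp b)) b < \<epsilon> / 8"
      using rp by auto
    then show "\<bar>dT (\<Psi> (rp a)) (\<Psi> (rp b)) - \<tau> * dist a b\<bar> < \<epsilon>"
      using close[OF ra(1) rb(1)] abs_scaled_dist_diff_le[OF \<tau>, of "P (rp a)" "P (rp b)" a b] by linarith
  next
    fix y assume y: "y \<in> {y \<in> S. dT (\<Psi> i\<^sub>0) y < R - \<epsilon>}"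
    obtain w where w: "w \<in> W" "\<tau> * dist x (P w) < R" "dT (\<Psi> w) y \<le> \<epsilon> / 4"
      using net_point_near[where W = W and i\<^sub>0 = i\<^sub>0 and \<tau> = \<tau> and x = x and P = P and R = R and y = y]
        S \<Psi> \<Psi>_dense \<epsilon> inner net_dense y by blast
    note ra = conjunct1[OF rp[OF w(2)]] conjunct2[OF rp[OF w(2)]]
    have "\<bar>\<tau> * dist (P (rp (P w))) (P w) - dT (\<Psi> (rp (P w))) (\<Psi> w)\<bar> < \<epsilon> / 4"
      using close[OF ra(1), of w] w(1) by blast
    then have "dT (\<Psi> (rp (P w))) (\<Psi> w) < 3 * \<epsilon> / 8"
      using ra(2) by linarith
    moreover have "dT (\<Psi> (rp (P w))) y \<le> dT (\<Psi> (rp (P w))) (\<Psi> w) + dT (\<Psi> w) y"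
      by (rule S.triangle) (use \<Psi> y in auto)
    ultimately have "dT (\<Psi> (rp (P w))) y < \<epsilon>"
      using w(3) \<epsilon> by linarith
    then show "\<exists>a\<in>{a \<in> UNIV. \<tau> * dist x a < R}. dT (\<Psi> (rp a)) y < \<epsilon>"
      using w(2) by auto
  qed
qed

lemma limit_net_dense:
  fixes x :: "'a::metric_space" and Q :: "nat \<Rightarrow> 'i \<Rightarrow> 'a"
  assumes base: "\<And>k. Q k i\<^sub>0 = x"
    and lim: "\<And>i j. (\<lambda>k. t k * dist (Q k i) (Q k j)) \<longlonglongrightarrow> D i j"
    and W: "finite W" "\<forall>\<^sub>F k in sequentially. \<forall>a. t k * dist x a < R \<longrightarrow> (\<exists>w\<in>W. t k * dist (Q k w) a < \<delta>)"
    and j: "D i\<^sub>0 j < R"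
  shows "\<exists>w\<in>W. D w j \<le> \<delta>"
proof (rule ccontr)
  assume "\<not> (\<exists>w\<in>W. D w j \<le> \<delta>)"
  then have "\<forall>\<^sub>F k in sequentially. \<forall>w\<in>W. \<delta> < t k * dist (Q k w) (Q k j)"
    using W(1) by (intro eventually_ball_finite ballI order_tendstoD(1)[OF lim]) auto
  moreover have "\<forall>\<^sub>F k in sequentially. t k * dist x (Q k j) < R"
    using order_tendstoD(2)[OF lim j] by (simp add: base)
  ultimately have "\<forall>\<^sub>F k in sequentially. False"
    using W(2) by eventually_elim force
  then show False
    by simp
qed

lemma pGH_conv_of_converging_nets:
  fixes x :: "'a::metric_space" and Q :: "nat \<Rightarrow> 'i \<Rightarrow> 'a"
  assumes t: "\<And>k. t k > 0" and base: "\<And>k. Q k i\<^sub>0 = x"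
    and lim: "\<And>i j. (\<lambda>k. t k * dist (Q k i) (Q k j)) \<longlonglongrightarrow> dT (\<Psi> i) (\<Psi> j)"
    and nets: "\<And>R \<delta>. 0 < R \<Longrightarrow> 0 < \<delta> \<Longrightarrow> \<exists>W. finite W \<and>
                 (\<forall>\<^sub>F k in sequentially. \<forall>a. t k * dist x a < R \<longrightarrow> (\<exists>w\<in>W. t k * dist (Q k w) a < \<delta>))"
    and S: "Metric_space S dT" "\<And>i. \<Psi> i \<in> S" "\<And>z e. z \<in> S \<Longrightarrow> 0 < e \<Longrightarrow> \<exists>i. dT (\<Psi> i) z < e"
  shows "pGH_conv (\<lambda>k. UNIV) (\<lambda>k a b. t k * dist a b) (\<lambda>k. x) S dT (\<Psi> i\<^sub>0)"
  unfolding pGH_conv_iff_GH_approx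
proof (intro allI impI)
  fix R \<epsilon> :: real assume R: "R > 0" and \<epsilon>: "\<epsilon> > 0"
  obtain W where W: "finite W"
    "\<forall>\<^sub>F k in sequentially. \<forall>a. t k * dist x a < R \<longrightarrow> (\<exists>w\<in>W. t k * dist (Q k w) a < \<epsilon> / 8)"
    using nets[OF R, of "\<epsilon> / 8"] \<epsilon> by auto
  have close: "\<forall>\<^sub>F k in sequentially. \<forall>v\<in>insert i\<^sub>0 W. \<forall>w\<in>insert i\<^sub>0 W.
      \<bar>t k * dist (Q k v) (Q k w) - dT (\<Psi> v) (\<Psi> w)\<bar> < \<epsilon> / 4"
  proof (intro eventually_ball_finite ballI)
    fix v w
    show "\<forall>\<^sub>F k in sequentially. \<bar>t k * dist (Q k v) (Q k w) - dT (\<Psi> v) (\<Psi> w)\<bar> < \<epsilon> / 4"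
      using tendstoD[OF lim[of v w], of "\<epsilon> / 4"] \<epsilon> by (simp add: dist_real_def)
  qed (use W(1) in auto)
  have inner: "\<forall>\<^sub>F k in sequentially. \<forall>w\<in>W. dT (\<Psi> i\<^sub>0) (\<Psi> w) < R \<longrightarrow> t k * dist x (Q k w) < R"
  proof (intro eventually_ball_finite[OF W(1)] ballI)
    fix w
    show "\<forall>\<^sub>F k in sequentially. dT (\<Psi> i\<^sub>0) (\<Psi> w) < R \<longrightarrow> t k * dist x (Q k w) < R"
      using order_tendstoD(2)[OF lim[of i\<^sub>0 w]] by (cases "dT (\<Psi> i\<^sub>0) (\<Psi> w) < R") (auto simp: base)
  qed
  show "\<forall>\<^sub>F k in sequentially. \<exists>f. GH_approx UNIV (\<lambda>a b. t k * dist a b) x S dT (\<Psi> i\<^sub>0) R \<epsilon> f"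
    using W(2) close inner
  proof eventually_elim
    case (elim k)
    show ?case
    proof (rule GH_approx_of_net[OF S])
      show "0 \<le> t k"
        using t[of k] by simp
      show "\<exists>w\<in>W. t k * dist (Q k w) a < \<epsilon> / 8" if "t k * dist x a < R" for a
        using elim(1) that by blast
      show "\<exists>w\<in>W. dT (\<Psi> w) (\<Psi> j) \<le> \<epsilon> / 8" if "dT (\<Psi> i\<^sub>0) (\<Psi> j) < R" for j
        by (rule limit_net_dense[where D = "\<lambda>i j. dT (\<Psi> i) (\<Psi> j)", OF base lim W that])
    qed (use elim \<epsilon> base in auto)
  qed
qed

section \<open>Existence of tangents\<close>

definition uniformly_totally_bounded_at :: "'a::metric_space \<Rightarrow> bool" where
  "uniformly_totally_bounded_at x \<longleftrightarrow>
     (\<forall>lam>0. Limsup (at_right 0) (\<lambda>r. covnum UNIV dist (lam * r) (cball x r)) < \<infinity>)"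

lemma uniformly_totally_bounded_atD:
  assumes "uniformly_totally_bounded_at x" "lam > 0"
  shows "Limsup (at_right 0) (\<lambda>r. covnum UNIV dist (lam * r) (cball x r)) \<noteq> \<infinity>"
  using assms unfolding uniformly_totally_bounded_at_def by (auto dest: less_imp_neq)

lemma eventually_scaled_covnum_bounded:
  fixes x :: "'a::metric_space"
  assumes H: "uniformly_totally_bounded_at x"
    and K: "K > 0"
  shows "\<exists>N. \<forall>\<^sub>F u in at_right 0. covnum UNIV dist (u / K) (cball x (K * u)) \<le> enat N"
proof -
  let ?f = "\<lambda>r. covnum UNIV dist (1 / K\<^sup>2 * r) (cball x r)"
  have "1 / K\<^sup>2 > 0"
    using K by simp
  then have "Limsup (at_right 0) ?f < \<infinity>"
    using H unfolding uniformly_totally_bounded_at_def by blast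
  then have fin: "Limsup (at_right 0) ?f \<noteq> \<infinity>"
    by (rule less_imp_neq)
  then obtain N where N: "Limsup (at_right 0) ?f = enat N"
    by auto
  have "filterlim (\<lambda>u. K * u) (at_right 0) (at_right (0::real))"
    using filtermap_times_pos_at_right[OF K, of 0] by (simp add: filterlim_def)
  with enat_Limsup_attained(1)[OF fin] have "\<forall>\<^sub>F u in at_right 0. ?f (K * u) \<le> enat N"
    unfolding N by (rule eventually_compose_filterlim)
  moreover have "1 / K\<^sup>2 * (K * u) = u / K" for u
    using K by (simp add: power2_eq_square)
  ultimately show ?thesis
    by auto
qed

lemma scaled_covering_centres:
  fixes x :: "'a::metric_space"
  assumes u: "0 < u" and K: "1 \<le> K"
  shows "\<exists>P :: nat \<Rightarrow> 'a. (\<forall>i. dist x (P i) \<le> (K + 1) * u) \<and>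
    (covnum UNIV dist (u / K) (cball x (K * u)) \<le> enat N \<longrightarrow> cball x (K * u) \<subseteq> (\<Union>i<N. ball (P i) (u / K)))"
proof (cases "covnum UNIV dist (u / K) (cball x (K * u)) \<le> enat N")
  case True
  have small: "u / K \<le> u"
    using u K by (simp add: divide_le_eq)
  obtain P where P: "\<And>i. dist x (P i) \<le> K * u + u / K" "cball x (K * u) \<subseteq> (\<Union>i<N. ball (P i) (u / K))"
  proof (rule covering_centres[OF True])
    show "0 \<le> u / K" "0 \<le> K * u"
      using u K by auto
  qed blast
  moreover have "dist x (P i) \<le> (K + 1) * u" for i
    using P(1)[of i] small unfolding distrib_right by linarith
  ultimately show ?thesis
    by blast
next
  case False
  then show ?thesis
    using u K by (intro exI[of _ "\<lambda>i. x"]) simp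
qed

lemma exists_scaled_nets:
  fixes x :: "'a::metric_space" and s :: "nat \<Rightarrow> real"
  assumes H: "uniformly_totally_bounded_at x" and s: "\<And>k. s k > 0" "s \<longlonglongrightarrow> 0"
  shows "\<exists>(N :: nat \<Rightarrow> nat) (P :: nat \<Rightarrow> nat \<Rightarrow> nat \<Rightarrow> 'a).
    (\<forall>k m i. dist x (P k m i) \<le> (real m + 2) * s k) \<and>
    (\<forall>m. \<forall>\<^sub>F k in sequentially.
       cball x ((real m + 1) * s k) \<subseteq> (\<Union>i<N m. ball (P k m i) (s k / (real m + 1))))"
proof -
  define K :: "nat \<Rightarrow> real" where "K m = real m + 1" for m
  have K: "K m \<ge> 1" for m
    by (simp add: K_def)
  have "\<exists>N. \<forall>\<^sub>F u in at_right 0. covnum UNIV dist (u / K m) (cball x (K m * u)) \<le> enat N" for m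
    using eventually_scaled_covnum_bounded[OF H, of "K m"] K[of m] by simp
  then obtain N where N: "\<And>m. \<forall>\<^sub>F u in at_right 0. covnum UNIV dist (u / K m) (cball x (K m * u)) \<le> enat (N m)"
    by metis
  have "\<forall>k m. \<exists>P. (\<forall>i. dist x (P i) \<le> (K m + 1) * s k) \<and>
      (covnum UNIV dist (s k / K m) (cball x (K m * s k)) \<le> enat (N m) \<longrightarrow>
         cball x (K m * s k) \<subseteq> (\<Union>i<N m. ball (P i) (s k / K m)))"
    using scaled_covering_centres s(1) K by blast
  then have "\<exists>P. \<forall>k m. (\<forall>i. dist x (P k m i) \<le> (K m + 1) * s k) \<and>
      (covnum UNIV dist (s k / K m) (cball x (K m * s k)) \<le> enat (N m) \<longrightarrow>
         cball x (K m * s k) \<subseteq> (\<Union>i<N m. ball (P k m i) (s k / K m)))"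
    by (intro choice allI) blast
  then obtain P where P: "\<And>k m i. dist x (P k m i) \<le> (K m + 1) * s k"
    and P_cover: "\<And>k m. covnum UNIV dist (s k / K m) (cball x (K m * s k)) \<le> enat (N m) \<Longrightarrow>
        cball x (K m * s k) \<subseteq> (\<Union>i<N m. ball (P k m i) (s k / K m))"
    by blast
  have "filterlim s (at_right 0) sequentially"
    using s by (intro tendsto_imp_filterlim_at_right) auto
  with N have "\<forall>\<^sub>F k in sequentially. covnum UNIV dist (s k / K m) (cball x (K m * s k)) \<le> enat (N m)" for m
    by (rule eventually_compose_filterlim)
  then have "\<forall>\<^sub>F k in sequentially. cball x (K m * s k) \<subseteq> (\<Union>i<N m. ball (P k m i) (s k / K m))" for m
    by (rule eventually_mono) (rule P_cover)
  moreover have "dist x (P k m i) \<le> (real m + 2) * s k" for k m i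
    using P[of k m i] by (simp add: K_def algebra_simps)
  ultimately show ?thesis
    unfolding K_def by blast
qed

lemma uniform_nets_of_scaled_nets:
  fixes x :: "'a::metric_space" and s :: "nat \<Rightarrow> real" and P :: "nat \<Rightarrow> nat \<Rightarrow> nat \<Rightarrow> 'a"
  assumes s: "\<And>k. s k > 0"
    and P: "\<And>m. \<forall>\<^sub>F k in sequentially.
              cball x ((real m + 1) * s k) \<subseteq> (\<Union>i<N m. ball (P k m i) (s k / (real m + 1)))"
    and R: "0 < R" and \<delta>: "0 < \<delta>"
  shows "\<exists>W. finite W \<and> (\<forall>\<^sub>F k in sequentially. \<forall>a. 1 / s k * dist x a < R \<longrightarrow>
           (\<exists>w\<in>W. 1 / s k * dist (case_option x (\<lambda>(m, i). P k m i) w) a < \<delta>))"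
proof -
  obtain m :: nat where m: "max R (1 / \<delta>) \<le> real m"
    using real_arch_simple by blast
  then have Km: "R \<le> real m + 1" "1 / (real m + 1) \<le> \<delta>"
    using \<delta> by (auto simp: divide_le_eq mult.commute distrib_left)
  have "\<forall>\<^sub>F k in sequentially. \<forall>a. 1 / s k * dist x a < R \<longrightarrow>
      (\<exists>w\<in>Some ` ({m} \<times> {..<N m}). 1 / s k * dist (case_option x (\<lambda>(m, i). P k m i) w) a < \<delta>)"
    using P[of m]
  proof eventually_elim
    case (elim k)
    show ?case
    proof (intro allI impI)
      fix a assume "1 / s k * dist x a < R"
      then have "dist x a < R * s k"
        using s[of k] by (simp add: field_simps)
      moreover have "R * s k \<le> (real m + 1) * s k"
        using Km(1) s[of k] by (intro mult_right_mono) auto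
      ultimately have "dist x a \<le> (real m + 1) * s k"
        by linarith
      then have "a \<in> (\<Union>i<N m. ball (P k m i) (s k / (real m + 1)))"
        by (intro subsetD[OF elim]) simp
      then obtain i where i: "i < N m" "dist (P k m i) a < s k / (real m + 1)"
        by (auto simp: mem_ball)
      then have "1 / s k * dist (P k m i) a < 1 / (real m + 1)"
        using s[of k] by (simp add: field_simps)
      with i(1) Km(2) show "\<exists>w\<in>Some ` ({m} \<times> {..<N m}).
          1 / s k * dist (case_option x (\<lambda>(m, i). P k m i) w) a < \<delta>"
        by (intro bexI[of _ "Some (m, i)"]) auto
    qed
  qed
  then show ?thesis
    by (intro exI[of _ "Some ` ({m} \<times> {..<N m})"] conjI) simp_all
qed

lemma exists_tangent_along_subseq:
  fixes x :: "'a::metric_space" and s :: "nat \<Rightarrow> real"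
  assumes H: "uniformly_totally_bounded_at x" and s: "\<And>k. s k > 0" "s \<longlonglongrightarrow> 0"
  obtains S dT p \<sigma> where "(S, dT, p) \<in> tangents x" "strict_mono \<sigma>"
    "pGH_conv (\<lambda>n. UNIV) (\<lambda>n a b. 1 / s (\<sigma> n) * dist a b) (\<lambda>n. x) S dT p"
proof -
  obtain N :: "nat \<Rightarrow> nat" and P :: "nat \<Rightarrow> nat \<Rightarrow> nat \<Rightarrow> 'a"
    where P: "\<forall>k m i. dist x (P k m i) \<le> (real m + 2) * s k"
    and nets: "\<forall>m. \<forall>\<^sub>F k in sequentially.
       cball x ((real m + 1) * s k) \<subseteq> (\<Union>i<N m. ball (P k m i) (s k / (real m + 1)))"
    using exists_scaled_nets[OF H s] by blast
  \<comment> \<open>\<open>None\<close> indexes the base point, \<open>Some (m, i)\<close> the \<open>i\<close>-th centre of the \<open>m\<close>-th net.\<close>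
  define Q where "Q k = case_option x (\<lambda>(m, i). P k m i)" for k
  define c where "c = case_option 0 (\<lambda>(m :: nat, i :: nat). real m + 2)"
  have Q: "dist x (Q k i) \<le> c i * s k" for k i
  proof (cases i)
    case (Some mi)
    then show ?thesis
      using P by (simp add: Q_def c_def split_beta)
  qed (simp add: Q_def c_def)
  have nonneg: "0 \<le> 1 / s k" for k
    using s(1)[of k] by simp
  have bdd: "bounded (range (\<lambda>k. 1 / s k * dist (Q k i) (Q k j)))" for i j
    using s(1) Q by (rule bounded_scaled_dist)
  obtain \<sigma> D where \<sigma>: "strict_mono \<sigma>"
    and lim: "\<And>i j. (\<lambda>n. 1 / s (\<sigma> n) * dist (Q (\<sigma> n) i) (Q (\<sigma> n) j)) \<longlonglongrightarrow> D i j"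
    and D: "\<And>i. D i i = 0" "\<And>i j. D i j = D j i" "\<And>i j k. D i k \<le> D i j + D j k"
    using subseq_dist_limits[of "\<lambda>k. 1 / s k" Q, OF nonneg bdd] by blast
  obtain S :: "real set" and dS \<Psi> where S: "Metric_space S dS" "Metric_space.mcomplete S dS"
    "\<And>i. \<Psi> i \<in> S" "\<And>i j. dS (\<Psi> i) (\<Psi> j) = D i j"
    "\<And>z e. z \<in> S \<Longrightarrow> 0 < e \<Longrightarrow> \<exists>i. dS (\<Psi> i) z < e"
    using complete_real_model_of_pseudometric[of D, OF D] by blast
  have conv: "pGH_conv (\<lambda>n. UNIV) (\<lambda>n a b. 1 / s (\<sigma> n) * dist a b) (\<lambda>n. x) S dS (\<Psi> None)"
  proof (rule pGH_conv_of_converging_nets[where Q = "\<lambda>n. Q (\<sigma> n)"])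
    show "(\<lambda>n. 1 / s (\<sigma> n) * dist (Q (\<sigma> n) i) (Q (\<sigma> n) j)) \<longlonglongrightarrow> dS (\<Psi> i) (\<Psi> j)" for i j
      using lim by (simp add: S(4))
    fix R \<delta> :: real assume "0 < R" "0 < \<delta>"
    then obtain W where "finite W"
      "\<forall>\<^sub>F k in sequentially. \<forall>a. 1 / s k * dist x a < R \<longrightarrow> (\<exists>w\<in>W. 1 / s k * dist (Q k w) a < \<delta>)"
      using uniform_nets_of_scaled_nets[where x = x and s = s and N = N and P = P and R = R and \<delta> = \<delta>]
        s(1) nets[rule_format] unfolding Q_def by blast
    moreover note eventually_compose_filterlim[OF _ filterlim_subseq[OF \<sigma>]]
    ultimately show "\<exists>W. finite W \<and> (\<forall>\<^sub>F n in sequentially. \<forall>a. 1 / s (\<sigma> n) * dist x a < R \<longrightarrow>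
        (\<exists>w\<in>W. 1 / s (\<sigma> n) * dist (Q (\<sigma> n) w) a < \<delta>))"
      by blast
  qed (use s(1) S in \<open>auto simp: Q_def\<close>)
  moreover have "(\<lambda>n. s (\<sigma> n)) \<longlonglongrightarrow> 0"
    using LIMSEQ_subseq_LIMSEQ[OF s(2) \<sigma>] by (simp add: o_def)
  ultimately have "(S, dS, \<Psi> None) \<in> tangents x"
    using S(1-3) s(1) by (intro tangentsI) auto
  then show ?thesis
    using \<sigma> conv by (rule that)
qed

lemma exists_tangent_covnum_ge:
  fixes x :: "'a::metric_space"
  assumes H: "uniformly_totally_bounded_at x" and r: "0 < r" "r < 1"
  obtains T where "T \<in> tangents x"
    "\<forall>\<^sub>F s in at_right 0. covnum UNIV dist (r * s) (cball x s) \<le> covnum_T T (r / 2) (unit_cball T)"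
proof -
  define N where "N s = covnum UNIV dist (r * s) (cball x s)" for s
  have fin: "Limsup (at_right 0) N \<noteq> \<infinity>"
    unfolding N_def using uniformly_totally_bounded_atD[OF H r(1)] .
  have "\<exists>\<^sub>F s in at_right 0. Limsup (at_right 0) N \<le> N s"
    by (rule enat_Limsup_attained(2)[OF fin]) simp
  then obtain u where u: "\<And>k. u k > 0" "u \<longlonglongrightarrow> 0" "\<And>k. Limsup (at_right 0) N \<le> N (u k)"
    using frequently_at_right_0E by blast
  define e where "e = r / 8"
  define s where "s k = u k / (1 - e)" for k
  have s: "\<And>k. s k > 0" "s \<longlonglongrightarrow> 0"
    using u(1) tendsto_divide[OF u(2) tendsto_const, of "1 - e"] r
    unfolding s_def[abs_def] e_def by auto
  obtain S dT p \<sigma> where T: "(S, dT, p) \<in> tangents x" "strict_mono \<sigma>"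
    "pGH_conv (\<lambda>n. UNIV) (\<lambda>n a b. 1 / s (\<sigma> n) * dist a b) (\<lambda>n. x) S dT p"
    by (rule exists_tangent_along_subseq[OF H s])
  have "Metric_space S dT"
    using T(1) unfolding tangents_def by auto
  then have "\<forall>\<^sub>F n in sequentially. covnum UNIV dist ((r / 2 + 2 * e) / (1 / s (\<sigma> n)))
      (cball x ((1 - e) / (1 / s (\<sigma> n)))) \<le> covnum S dT (r / 2) {y\<in>S. dT p y \<le> 1}"
    by (rule eventually_covnum_le_tangent[OF _ T(3)]) (use s(1) r in \<open>auto simp: e_def\<close>)
  then obtain n where n: "covnum UNIV dist ((r / 2 + 2 * e) / (1 / s (\<sigma> n)))
      (cball x ((1 - e) / (1 / s (\<sigma> n)))) \<le> covnum S dT (r / 2) {y\<in>S. dT p y \<le> 1}"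
    using eventually_happens'[OF sequentially_bot] by blast
  have "(1 - e) / (1 / s (\<sigma> n)) = u (\<sigma> n)" "(r / 2 + 2 * e) / (1 / s (\<sigma> n)) \<le> r * u (\<sigma> n)"
    using u(1)[of "\<sigma> n"] r by (simp_all add: s_def e_def field_simps)
  then have "N (u (\<sigma> n)) \<le> covnum UNIV dist ((r / 2 + 2 * e) / (1 / s (\<sigma> n)))
      (cball x ((1 - e) / (1 / s (\<sigma> n))))"
    unfolding N_def by (simp add: covnum_mono)
  with u(3)[of "\<sigma> n"] n have "Limsup (at_right 0) N \<le> covnum_T (S, dT, p) (r / 2) (unit_cball (S, dT, p))"
    unfolding covnum_T_unit_cball by (meson order.trans)
  then have "\<forall>\<^sub>F s in at_right 0. N s \<le> covnum_T (S, dT, p) (r / 2) (unit_cball (S, dT, p))"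
    using enat_Limsup_attained(1)[OF fin] by (auto elim: eventually_mono)
  then show ?thesis
    using that[OF T(1)] unfolding N_def by blast
qed

lemma exists_tangent_covnum_le:
  fixes x :: "'a::metric_space"
  assumes H: "uniformly_totally_bounded_at x" and r: "0 < r" "r < 1"
  obtains T where "T \<in> tangents x"
    "\<forall>\<^sub>F s in at_right 0. covnum_T T r (unit_cball T) \<le> covnum UNIV dist (r / 2 * s) (cball x s)"
proof -
  define N where "N s = covnum UNIV dist (r / 2 * s) (cball x s)" for s
  have "Liminf (at_right 0) N \<le> Limsup (at_right 0) N"
    by (rule Liminf_le_Limsup) simp
  moreover have "Limsup (at_right 0) N \<noteq> \<infinity>"
    unfolding N_def by (rule uniformly_totally_bounded_atD[OF H]) (use r in simp)
  ultimately have fin: "Liminf (at_right 0) N \<noteq> \<infinity>"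
    by (auto simp: top_enat_def[symmetric] top_unique)
  obtain u where u: "\<And>k. u k > 0" "u \<longlonglongrightarrow> 0" "\<And>k. N (u k) \<le> Liminf (at_right 0) N"
    using frequently_at_right_0E[OF enat_Liminf_attained(2)[OF fin]] by blast
  define e where "e = r / 8"
  define s where "s k = u k / (1 + 2 * e)" for k
  have s: "\<And>k. s k > 0" "s \<longlonglongrightarrow> 0"
    using u(1) tendsto_divide[OF u(2) tendsto_const, of "1 + 2 * e"] r
    unfolding s_def[abs_def] e_def by auto
  obtain S dT p \<sigma> where T: "(S, dT, p) \<in> tangents x" "strict_mono \<sigma>"
    "pGH_conv (\<lambda>n. UNIV) (\<lambda>n a b. 1 / s (\<sigma> n) * dist a b) (\<lambda>n. x) S dT p"
    by (rule exists_tangent_along_subseq[OF H s])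
  have "Metric_space S dT"
    using T(1) unfolding tangents_def by auto
  then have "\<forall>\<^sub>F n in sequentially. covnum S dT r {y\<in>S. dT p y \<le> 1} \<le>
      covnum UNIV dist ((r - 2 * e) / (1 / s (\<sigma> n))) (cball x ((1 + 2 * e) / (1 / s (\<sigma> n))))"
    by (rule eventually_tangent_covnum_le[OF _ T(3)]) (use s(1) r in \<open>auto simp: e_def\<close>)
  then obtain n where n: "covnum S dT r {y\<in>S. dT p y \<le> 1} \<le>
      covnum UNIV dist ((r - 2 * e) / (1 / s (\<sigma> n))) (cball x ((1 + 2 * e) / (1 / s (\<sigma> n))))"
    using eventually_happens'[OF sequentially_bot] by blast
  have "(1 + 2 * e) / (1 / s (\<sigma> n)) = u (\<sigma> n)" "r / 2 * u (\<sigma> n) \<le> (r - 2 * e) / (1 / s (\<sigma> n))"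
    using u(1)[of "\<sigma> n"] r by (simp_all add: s_def e_def field_simps)
  then have "covnum UNIV dist ((r - 2 * e) / (1 / s (\<sigma> n))) (cball x ((1 + 2 * e) / (1 / s (\<sigma> n))))
      \<le> N (u (\<sigma> n))"
    unfolding N_def by (simp add: covnum_mono)
  with u(3)[of "\<sigma> n"] n have "covnum_T (S, dT, p) r (unit_cball (S, dT, p)) \<le> Liminf (at_right 0) N"
    unfolding covnum_T_unit_cball by (meson order.trans)
  then have "\<forall>\<^sub>F s in at_right 0. covnum_T (S, dT, p) r (unit_cball (S, dT, p)) \<le> N s"
    using enat_Liminf_attained(1)[OF fin] by (auto elim: eventually_mono)
  then show ?thesis
    using that[OF T(1)] unfolding N_def by blast
qed

section \<open>Tangential dimensions\<close>

definition upper_dim_at_scale :: "'a::metric_space \<Rightarrow> real \<Rightarrow> ereal" where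
  "upper_dim_at_scale x lam =
     Limsup (at_right 0) (\<lambda>s. elog (covnum UNIV dist (lam * s) (cball x s)) / ereal (ln (1 / lam)))"

definition lower_dim_at_scale :: "'a::metric_space \<Rightarrow> real \<Rightarrow> ereal" where
  "lower_dim_at_scale x lam =
     Liminf (at_right 0) (\<lambda>s. elog (covnum UNIV dist (lam * s) (cball x s)) / ereal (ln (1 / lam)))"

definition tangent_sup_dim :: "'a::metric_space \<Rightarrow> real \<Rightarrow> ereal" where
  "tangent_sup_dim x r = (SUP T\<in>tangents x. elog (covnum_T T r (unit_cball T)) / ereal (ln (1 / r)))"

definition tangent_inf_dim :: "'a::metric_space \<Rightarrow> real \<Rightarrow> ereal" where
  "tangent_inf_dim x r = (INF T\<in>tangents x. elog (covnum_T T r (unit_cball T)) / ereal (ln (1 / r)))"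

lemma upper_dim_at_scale_nonneg: "0 < r \<Longrightarrow> r < 1 \<Longrightarrow> 0 \<le> upper_dim_at_scale x r"
  unfolding upper_dim_at_scale_def by (rule le_Limsup) (auto intro!: always_eventually elog_div_ln_nonneg)

lemma lower_dim_at_scale_nonneg: "0 < r \<Longrightarrow> r < 1 \<Longrightarrow> 0 \<le> lower_dim_at_scale x r"
  unfolding lower_dim_at_scale_def by (rule Liminf_bounded) (auto intro!: always_eventually elog_div_ln_nonneg)

lemma tangent_inf_dim_nonneg: "0 < r \<Longrightarrow> r < 1 \<Longrightarrow> 0 \<le> tangent_inf_dim x r"
  unfolding tangent_inf_dim_def by (rule INF_greatest) (rule elog_div_ln_nonneg)

lemma tangent_sup_dim_nonneg:
  assumes "uniformly_totally_bounded_at x" "0 < r" "r < 1"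
  shows "0 \<le> tangent_sup_dim x r"
proof -
  obtain T where "T \<in> tangents x"
    using exists_tangent_covnum_le[OF assms] by blast
  then show ?thesis
    unfolding tangent_sup_dim_def by (rule SUP_upper2) (rule elog_div_ln_nonneg[OF assms(2,3)])
qed

lemma upper_dim_at_scale_le_tangent_sup_dim:
  assumes H: "uniformly_totally_bounded_at x" and r: "0 < r" "r < 1"
  shows "upper_dim_at_scale x r \<le> tangent_sup_dim x (r / 2) * ereal (ln (1 / (r / 2)) / ln (1 / r))"
proof -
  obtain T where T: "T \<in> tangents x"
    "\<forall>\<^sub>F s in at_right 0. covnum UNIV dist (r * s) (cball x s) \<le> covnum_T T (r / 2) (unit_cball T)"
    using exists_tangent_covnum_ge[OF H r] by blast
  let ?n = "covnum_T T (r / 2) (unit_cball T)"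
  have L: "ln (1 / r) > 0" "ln (1 / (r / 2)) > 0"
    using r by simp_all
  have "upper_dim_at_scale x r \<le> elog ?n / ereal (ln (1 / r))"
    unfolding upper_dim_at_scale_def
    by (rule Limsup_bounded) (use T(2) L in \<open>auto elim!: eventually_mono intro!: elog_divide_mono\<close>)
  also have "\<dots> = elog ?n / ereal (ln (1 / (r / 2))) * ereal (ln (1 / (r / 2)) / ln (1 / r))"
    by (rule ereal_divide_change_denom[OF elog_nonneg L])
  also have "\<dots> \<le> tangent_sup_dim x (r / 2) * ereal (ln (1 / (r / 2)) / ln (1 / r))"
    unfolding tangent_sup_dim_def using T(1) L by (intro ereal_mult_right_mono SUP_upper) auto
  finally show ?thesis .
qed

lemma tangent_sup_dim_le_upper_dim_at_scale:
  assumes r: "0 < r" "r < 1"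
  shows "tangent_sup_dim x r \<le> upper_dim_at_scale x (r / 2) * ereal (ln (1 / (r / 2)) / ln (1 / r))"
  unfolding tangent_sup_dim_def
proof (rule SUP_least)
  fix T assume T: "T \<in> tangents x"
  let ?n = "covnum_T T r (unit_cball T)"
  have L: "ln (1 / r) > 0" "ln (1 / (r / 2)) > 0"
    using r by simp_all
  have "elog ?n / ereal (ln (1 / (r / 2))) \<le> upper_dim_at_scale x (r / 2)"
    unfolding upper_dim_at_scale_def
    by (rule le_Limsup_of_frequently, rule frequently_elim1[OF frequently_tangent_covnum_le[OF T r]])
      (use L in \<open>auto intro!: elog_divide_mono\<close>)
  then show "elog ?n / ereal (ln (1 / r)) \<le> upper_dim_at_scale x (r / 2) * ereal (ln (1 / (r / 2)) / ln (1 / r))"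
    unfolding ereal_divide_change_denom[OF elog_nonneg L] using L by (intro ereal_mult_right_mono) auto
qed

lemma lower_dim_at_scale_le_tangent_inf_dim:
  assumes r: "0 < r" "r < 1"
  shows "lower_dim_at_scale x r \<le> tangent_inf_dim x (r / 2) * ereal (ln (1 / (r / 2)) / ln (1 / r))"
  unfolding tangent_inf_dim_def
proof (rule ereal_le_INF_mult)
  fix T assume T: "T \<in> tangents x"
  let ?n = "covnum_T T (r / 2) (unit_cball T)"
  have L: "ln (1 / r) > 0" "ln (1 / (r / 2)) > 0"
    using r by simp_all
  have "lower_dim_at_scale x r \<le> elog ?n / ereal (ln (1 / r))"
    unfolding lower_dim_at_scale_def
    by (rule Liminf_le_of_frequently, rule frequently_elim1[OF frequently_covnum_le_tangent[OF T r]])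
      (use L in \<open>auto intro!: elog_divide_mono\<close>)
  then show "lower_dim_at_scale x r \<le> elog ?n / ereal (ln (1 / (r / 2))) * ereal (ln (1 / (r / 2)) / ln (1 / r))"
    by (simp only: ereal_divide_change_denom[OF elog_nonneg L])
qed (use r in simp)

lemma tangent_inf_dim_le_lower_dim_at_scale:
  assumes H: "uniformly_totally_bounded_at x" and r: "0 < r" "r < 1"
  shows "tangent_inf_dim x r \<le> lower_dim_at_scale x (r / 2) * ereal (ln (1 / (r / 2)) / ln (1 / r))"
proof -
  obtain T where T: "T \<in> tangents x"
    "\<forall>\<^sub>F s in at_right 0. covnum_T T r (unit_cball T) \<le> covnum UNIV dist (r / 2 * s) (cball x s)"
    using exists_tangent_covnum_le[OF H r] by blast
  let ?n = "covnum_T T r (unit_cball T)"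
  have L: "ln (1 / r) > 0" "ln (1 / (r / 2)) > 0"
    using r by simp_all
  have "tangent_inf_dim x r \<le> elog ?n / ereal (ln (1 / r))"
    unfolding tangent_inf_dim_def using T(1) by (rule INF_lower)
  also have "\<dots> = elog ?n / ereal (ln (1 / (r / 2))) * ereal (ln (1 / (r / 2)) / ln (1 / r))"
    by (rule ereal_divide_change_denom[OF elog_nonneg L])
  also have "\<dots> \<le> lower_dim_at_scale x (r / 2) * ereal (ln (1 / (r / 2)) / ln (1 / r))"
    unfolding lower_dim_at_scale_def
    by (intro ereal_mult_right_mono Liminf_bounded) (use T(2) L in \<open>auto elim!: eventually_mono intro!: elog_divide_mono\<close>)
  finally show ?thesis .
qed

theorem theorem3p4:
  fixes x :: "'a::metric_space"
  assumes "\<And>lam. lam > 0 \<Longrightarrow>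
             Limsup (at_right 0) (\<lambda>r. covnum UNIV dist (lam * r) (cball x r)) < \<infinity>"
  shows "upper_tdim x = Limsup (at_right 0) (\<lambda>r. SUP T\<in>tangents x.
            elog (covnum_T T r (unit_cball T)) / ereal (ln (1 / r))) \<and>
         lower_tdim x = Liminf (at_right 0) (\<lambda>r. INF T\<in>tangents x.
            elog (covnum_T T r (unit_cball T)) / ereal (ln (1 / r)))"
proof -
  have H: "uniformly_totally_bounded_at x"
    using assms unfolding uniformly_totally_bounded_at_def by blast
  have "Limsup (at_right 0) (upper_dim_at_scale x) = Limsup (at_right 0) (tangent_sup_dim x)"
    by (intro antisym Limsup_le_Limsup_halved upper_dim_at_scale_le_tangent_sup_dim[OF H]
        tangent_sup_dim_le_upper_dim_at_scale tangent_sup_dim_nonneg[OF H] upper_dim_at_scale_nonneg)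
  moreover have "Liminf (at_right 0) (lower_dim_at_scale x) = Liminf (at_right 0) (tangent_inf_dim x)"
    by (intro antisym Liminf_le_Liminf_halved lower_dim_at_scale_le_tangent_inf_dim
        tangent_inf_dim_le_lower_dim_at_scale[OF H] tangent_inf_dim_nonneg lower_dim_at_scale_nonneg)
  ultimately show ?thesis
    unfolding upper_tdim_def lower_tdim_def upper_dim_at_scale_def[abs_def] lower_dim_at_scale_def[abs_def]
      tangent_sup_dim_def[abs_def] tangent_inf_dim_def[abs_def] by simp
qed

end
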